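(* Let $G$ be a compact Abelian group with unit $e$ and continuous length function $l$; let $(H_n)_{n\in\mathbb{N}}$ be closed subgroups converging to $G$ in the Hausdorff distance of $d_l(g,g')=l(g^{-1}g')$; let $H_\infty=G$, $\lambda_n$ the Haar probability measure on $H_n$, $J_n$ the annihilator of $H_n$ in $\widehat G$, $q_n:\widehat G\to\widehat{H_n}=\widehat G/J_n$; let $\sigma_n$ be skew bicharacters of $\widehat{H_n}$ ($n\in\mathbb{N}\cup\{\infty\}$) with lifts to $\widehat G$ converging pointwise to $\sigma_\infty$; let $\|\cdot\|_n$ be the norm of $C^*(\widehat{H_n},\sigma_n)$ and $L_n(a)=\sup\{l(g)^{-1}\|a-\alpha^g_{H_n}(a)\|_n:g\in H_n\setminus\{e\}\}$. Let $\varepsilon>0$ and let $\varphi_\varepsilon$ be a finite linear combination of characters of $G$ with $\varphi_\varepsilon\ge0$, $\int_G\varphi_\varepsilon\,d\lambda_\infty=1$ and $\int_G\varphi_\varepsilon l\,d\lambda_\infty\le\varepsilon/(3(1+\varepsilon))$. Let $B\subseteq\widehat G$ be the (finite) set of characters with nonzero coefficient in $\varphi_\varepsilon$, let $V_\varepsilon=\{f\in C_c(\widehat G):\operatorname{supp}f\subseteq B,\ f=f^*\text{ in }C^*(\widehat G,\sigma_\infty)\}$, let $N_\varepsilon\in\mathbb{N}$ be such that for all $n\ge N_\varepsilon$, $q_n$ is injective on $B$ and $\int_{H_n}\varphi_\varepsilon d\lambda_n\ge(1+\varepsilon)^{-1}$, and for $n\ge N_\varepsilon$ let $\theta_n:V_\varepsilon\to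 C^*(\widehat{H_n},\sigma_n)$ be $\theta_n(f)(q_n(h))=\sum_{j\in J_n}f(hj)$, with $\theta_\infty=\mathrm{Id}$. Then for every $a\in V_\varepsilon$, $\lim_{n\to\infty}L_n(\theta_n(a))=L_\infty(a)$.
   Context: Length function: $l\ge0$, $l(g)=0$ iff $g=e$, symmetric, subadditive. Skew bicharacter: bicharacter $\sigma$ of a discrete Abelian group with $\sigma(\chi,\chi)=1$. $C^*(\Gamma,\sigma)$: twisted group C*-algebra (completion of $C_c(\Gamma)$ under twisted convolution $(f*g)(\chi)=\sum_{\chi'}f(\chi')g(\chi'^{-1}\chi)\sigma(\chi',\chi'^{-1}\chi)$, involution $f^*(\chi)=\sigma(\chi,\chi^{-1})\overline{f(\chi^{-1})}$). $\alpha_{H_n}$ is the dual action $\alpha^g_{H_n}(f)=\langle g,\cdot\rangle f$. *)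

theory Defs
  imports "HOL-Analysis.Analysis"
begin

text \<open>The compact Abelian group G is modelled as a whole type 'g of class
topological_ab_group_add (written additively: unit 0, g^{-1}g' = -g + g').\<close>

definition length_fun :: "('g::group_add \<Rightarrow> real) \<Rightarrow> bool" where
  "length_fun l \<longleftrightarrow> (\<forall>g. l g \<ge> 0) \<and> (\<forall>g. l g = 0 \<longleftrightarrow> g = 0)
     \<and> (\<forall>g. l (- g) = l g) \<and> (\<forall>g h. l (g + h) \<le> l g + l h)"

definition is_subgroup :: "'g::group_add set \<Rightarrow> bool" where
  "is_subgroup H \<longleftrightarrow> 0 \<in> H \<and> (\<forall>x\<in>H. \<forall>y\<in>H. x + y \<in> H) \<and> (\<forall>x\<in>H. - x \<in> H)"

definition hausdorff_dist :: "('a \<Rightarrow> 'a \<Rightarrow> real) \<Rightarrow> 'a set \<Rightarrow> 'a set \<Rightarrow> ereal" where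
  "hausdorff_dist d A B = max (SUP a\<in>A. INF b\<in>B. ereal (d a b)) (SUP b\<in>B. INF a\<in>A. ereal (d a b))"

definition haar_prob :: "'g::{topological_group_add} set \<Rightarrow> 'g measure \<Rightarrow> bool" where
  "haar_prob H M \<longleftrightarrow> sets M = sets (borel :: 'g measure) \<and> emeasure M UNIV = 1
     \<and> emeasure M (- H) = 0
     \<and> (\<forall>h\<in>H. \<forall>A\<in>sets (borel :: 'g measure). emeasure M ((\<lambda>x. h + x) ` A) = emeasure M A)"

definition characters :: "('g::{topological_space, group_add} \<Rightarrow> complex) set" where
  "characters = {\<gamma>. continuous_on UNIV \<gamma> \<and> (\<forall>x. cmod (\<gamma> x) = 1)
                     \<and> (\<forall>x y. \<gamma> (x + y) = \<gamma> x * \<gamma> y)}"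

definition annihilator :: "'g::{topological_space, group_add} set \<Rightarrow> ('g \<Rightarrow> complex) set" where
  "annihilator H = {\<gamma> \<in> characters. \<forall>h\<in>H. \<gamma> h = 1}"

text \<open>The quotient map q : \<open>\<widehat>G\<close> \<rightarrow> \<open>\<widehat>G\<close>/J, realised as restriction of characters to H
  (two characters have the same restriction iff they differ by an element of J).\<close>
definition q :: "'g set \<Rightarrow> ('g \<Rightarrow> complex) \<Rightarrow> ('g \<Rightarrow> complex)" where
  "q H \<gamma> = restrict \<gamma> H"

definition dual_sub :: "'g::{topological_space, group_add} set \<Rightarrow> ('g \<Rightarrow> complex) set" where
  "dual_sub H = q H ` characters"

definition dmul :: "'g set \<Rightarrow> ('g \<Rightarrow> complex) \<Rightarrow> ('g \<Rightarrow> complex) \<Rightarrow> ('g \<Rightarrow> complex)" where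
  "dmul H a b = restrict (\<lambda>x. a x * b x) H"

definition dinv :: "'g set \<Rightarrow> ('g \<Rightarrow> complex) \<Rightarrow> ('g \<Rightarrow> complex)" where
  "dinv H a = restrict (\<lambda>x. cnj (a x)) H"

text \<open>Generic discrete Abelian group (\<Gamma>, mul, ginv): skew bicharacters,
  twisted convolution, involution, and the C*-norm of C*(\<Gamma>,\<sigma>) on C_c(\<Gamma>)
  (computed in the left regular \<sigma>-representation on \<ell>^2(\<Gamma>)).\<close>

definition skew_bichar :: "'c set \<Rightarrow> ('c \<Rightarrow> 'c \<Rightarrow> 'c) \<Rightarrow> ('c \<Rightarrow> 'c \<Rightarrow> complex) \<Rightarrow> bool" where
  "skew_bichar \<Gamma> mul \<sigma> \<longleftrightarrow>
     (\<forall>a\<in>\<Gamma>. \<forall>b\<in>\<Gamma>. cmod (\<sigma> a b) = 1)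
   \<and> (\<forall>a\<in>\<Gamma>. \<forall>b\<in>\<Gamma>. \<forall>c\<in>\<Gamma>. \<sigma> (mul a b) c = \<sigma> a c * \<sigma> b c \<and> \<sigma> a (mul b c) = \<sigma> a b * \<sigma> a c)
   \<and> (\<forall>a\<in>\<Gamma>. \<sigma> a a = 1)"

definition tw_conv :: "'c set \<Rightarrow> ('c \<Rightarrow> 'c \<Rightarrow> 'c) \<Rightarrow> ('c \<Rightarrow> 'c) \<Rightarrow> ('c \<Rightarrow> 'c \<Rightarrow> complex)
     \<Rightarrow> ('c \<Rightarrow> complex) \<Rightarrow> ('c \<Rightarrow> complex) \<Rightarrow> ('c \<Rightarrow> complex)" where
  "tw_conv \<Gamma> mul ginv \<sigma> f g = (\<lambda>\<gamma>. \<Sum>\<gamma>'\<in>{\<gamma>'\<in>\<Gamma>. f \<gamma>' \<noteq> 0}.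
       f \<gamma>' * g (mul (ginv \<gamma>') \<gamma>) * \<sigma> \<gamma>' (mul (ginv \<gamma>') \<gamma>))"

definition tw_star :: "('c \<Rightarrow> 'c) \<Rightarrow> ('c \<Rightarrow> 'c \<Rightarrow> complex) \<Rightarrow> ('c \<Rightarrow> complex) \<Rightarrow> ('c \<Rightarrow> complex)" where
  "tw_star ginv \<sigma> f = (\<lambda>\<gamma>. \<sigma> \<gamma> (ginv \<gamma>) * cnj (f (ginv \<gamma>)))"

definition l2norm :: "'c set \<Rightarrow> ('c \<Rightarrow> complex) \<Rightarrow> real" where
  "l2norm \<Gamma> \<xi> = sqrt (\<Sum>\<gamma>\<in>{\<gamma>\<in>\<Gamma>. \<xi> \<gamma> \<noteq> 0}. (cmod (\<xi> \<gamma>))\<^sup>2)"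

definition cstar_norm :: "'c set \<Rightarrow> ('c \<Rightarrow> 'c \<Rightarrow> 'c) \<Rightarrow> ('c \<Rightarrow> 'c) \<Rightarrow> ('c \<Rightarrow> 'c \<Rightarrow> complex)
     \<Rightarrow> ('c \<Rightarrow> complex) \<Rightarrow> real" where
  "cstar_norm \<Gamma> mul ginv \<sigma> f = Sup {l2norm \<Gamma> (tw_conv \<Gamma> mul ginv \<sigma> f \<xi>) | \<xi>.
       finite {\<gamma>\<in>\<Gamma>. \<xi> \<gamma> \<noteq> 0} \<and> l2norm \<Gamma> \<xi> \<le> 1}"

definition normH :: "'g::{topological_space, group_add} set \<Rightarrow> (('g \<Rightarrow> complex) \<Rightarrow> ('g \<Rightarrow> complex) \<Rightarrow> complex)
     \<Rightarrow> (('g \<Rightarrow> complex) \<Rightarrow> complex) \<Rightarrow> real" where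
  "normH H \<sigma> f = cstar_norm (dual_sub H) (dmul H) (dinv H) \<sigma> f"

definition dual_action :: "'g \<Rightarrow> (('g \<Rightarrow> complex) \<Rightarrow> complex) \<Rightarrow> (('g \<Rightarrow> complex) \<Rightarrow> complex)" where
  "dual_action g f = (\<lambda>\<psi>. \<psi> g * f \<psi>)"

definition LipL :: "('g::{topological_space, group_add} \<Rightarrow> real) \<Rightarrow> 'g set
     \<Rightarrow> (('g \<Rightarrow> complex) \<Rightarrow> ('g \<Rightarrow> complex) \<Rightarrow> complex) \<Rightarrow> (('g \<Rightarrow> complex) \<Rightarrow> complex) \<Rightarrow> ereal" where
  "LipL l H \<sigma> a = (SUP g\<in>H - {0}. ereal (normH H \<sigma> (\<lambda>\<psi>. a \<psi> - dual_action g a \<psi>) / l g))"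

definition theta :: "'g::{topological_space, group_add} set \<Rightarrow> (('g \<Rightarrow> complex) \<Rightarrow> complex)
     \<Rightarrow> (('g \<Rightarrow> complex) \<Rightarrow> complex)" where
  "theta H f = (\<lambda>\<psi>. let h = (SOME h. h \<in> characters \<and> q H h = \<psi>) in
      \<Sum>j\<in>{j\<in>annihilator H. f (\<lambda>x. h x * j x) \<noteq> 0}. f (\<lambda>x. h x * j x))"

definition V_eps :: "('g::{topological_space, group_add} \<Rightarrow> complex) set
     \<Rightarrow> (('g \<Rightarrow> complex) \<Rightarrow> ('g \<Rightarrow> complex) \<Rightarrow> complex) \<Rightarrow> (('g \<Rightarrow> complex) \<Rightarrow> complex) set" where
  "V_eps B \<sigma> = {f. (\<forall>\<gamma>. f \<gamma> \<noteq> 0 \<longrightarrow> \<gamma> \<in> B)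
      \<and> (\<forall>\<gamma>\<in>dual_sub UNIV. f \<gamma> = tw_star (dinv UNIV) \<sigma> f \<gamma>)}"

end

theory Submission
  imports Defs
begin

text \<open>Since \<open>\<alpha>\<^sup>g\<close> multiplies by \<open>\<langle>g,\<cdot>\<rangle>\<close>, the element \<open>a - \<alpha>\<^sup>g(a) = (1 - \<langle>g,\<cdot>\<rangle>) a\<close> is again
  supported in \<open>B\<close>, and for \<open>g \<in> H\<^sub>n\<close> it commutes with \<open>\<theta>\<^sub>n\<close>. So everything reduces to comparing
  \<open>\<parallel>\<theta>\<^sub>n f\<parallel>\<^sub>n\<close> with \<open>\<parallel>f\<parallel>\<^sub>\<infinity>\<close> for \<open>f\<close> supported in \<open>B\<close>.

  Upper bound: the discrete Abelian group \<open>\<widehat>G\<close> is amenable, so some unit vector \<open>\<eta> \<in> \<ell>\<^sup>2(\<widehat>G)\<close> is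
  almost invariant under \<open>B\<close>. The transfer \<open>\<xi> \<mapsto> ((\<gamma>, x) \<mapsto> \<xi>(\<gamma> q\<^sub>n(x)) \<eta>(x) \<sigma>\<^sub>n(\<gamma>, q\<^sub>n(x)))\<close> from
  \<open>\<ell>\<^sup>2(\<widehat>H\<^sub>n)\<close> to \<open>\<ell>\<^sup>2(\<widehat>H\<^sub>n \<times> \<widehat>G)\<close> is isometric and intertwines \<open>\<theta>\<^sub>n f\<close> with \<open>f\<close> up to an error
  controlled by the almost invariance of \<open>\<eta>\<close> and by \<open>\<sigma>\<^sub>n \<rightarrow> \<sigma>\<^sub>\<infinity>\<close> on the finite support of \<open>\<eta>\<close>.
  Hence \<open>\<parallel>\<theta>\<^sub>n f\<parallel>\<^sub>n \<le> (1 + \<delta>) \<parallel>f\<parallel>\<^sub>\<infinity>\<close> eventually, uniformly in \<open>f\<close>, which bounds \<open>lim sup L\<^sub>n(\<theta>\<^sub>n a)\<close>.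

  Lower bound: a finitely supported test vector nearly attaining \<open>\<parallel>f\<parallel>\<^sub>\<infinity>\<close> involves finitely many
  characters, on which \<open>q\<^sub>n\<close> is eventually injective, so it can be pushed forward to \<open>\<widehat>H\<^sub>n\<close>.
  Approximating \<open>g \<in> G\<close> by \<open>g\<^sub>n \<in> H\<^sub>n\<close> (Hausdorff convergence and compactness) then bounds
  \<open>lim inf L\<^sub>n(\<theta>\<^sub>n a)\<close>.\<close>

section \<open>Finitely supported sums and \<open>\<ell>\<^sup>2\<close> norms\<close>

lemma supp_sum_eq_sum:
  assumes "finite S" "S \<subseteq> A" "\<And>x. x \<in> A \<Longrightarrow> x \<notin> S \<Longrightarrow> g x = 0"
  shows "supp_sum g A = (\<Sum>x\<in>S. g x)"
  unfolding supp_sum_def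
  by (rule sum.mono_neutral_left) (use assms in \<open>auto simp: support_on_def\<close>)

lemma supp_sum_cong: "(\<And>x. x \<in> A \<Longrightarrow> u x = v x) \<Longrightarrow> supp_sum u A = supp_sum v A"
  unfolding supp_sum_def support_on_def by (rule sum.cong) auto

lemma supp_sum_nonneg: "(\<And>x. x \<in> A \<Longrightarrow> g x \<ge> 0) \<Longrightarrow> supp_sum g A \<ge> (0::real)"
  unfolding supp_sum_def support_on_def by (auto intro: sum_nonneg)

lemma supp_sum_mult_left: "supp_sum (\<lambda>x. c * f x) A = c * (supp_sum f A :: real)"
  by (cases "c = 0") (auto simp: supp_sum_def support_on_def sum_distrib_left)

lemma finite_support_on_add:
  "finite (support_on A u) \<Longrightarrow> finite (support_on A v) \<Longrightarrow> finite (support_on A (\<lambda>x. u x + v x))"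
  by (rule finite_subset[of _ "support_on A u \<union> support_on A v"]) (auto simp: support_on_def)

lemma finite_support_on_sum:
  "finite I \<Longrightarrow> (\<And>i. i \<in> I \<Longrightarrow> finite (support_on A (u i))) \<Longrightarrow>
     finite (support_on A (\<lambda>x. \<Sum>i\<in>I. u i x))"
proof (induction I rule: finite_induct)
  case empty
  then show ?case by (simp add: support_on_def)
next
  case (insert i I)
  then show ?case by (simp add: finite_support_on_add)
qed

lemma supp_sum_add:
  assumes "finite (support_on A f)" "finite (support_on A g)"
  shows "supp_sum (\<lambda>x. f x + g x) A = supp_sum f A + supp_sum g A"
proof -
  let ?S = "support_on A f \<union> support_on A g"
  have "supp_sum (\<lambda>x. f x + g x) A = (\<Sum>x\<in>?S. f x + g x)"
    and "supp_sum f A = (\<Sum>x\<in>?S. f x)" and "supp_sum g A = (\<Sum>x\<in>?S. g x)"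
    by (rule supp_sum_eq_sum; use assms in \<open>auto simp: support_on_def\<close>)+
  then show ?thesis by (simp add: sum.distrib)
qed

lemma supp_sum_sum:
  "finite I \<Longrightarrow> (\<And>i. i \<in> I \<Longrightarrow> finite (support_on A (u i))) \<Longrightarrow>
     supp_sum (\<lambda>x. \<Sum>i\<in>I. u i x) A = (\<Sum>i\<in>I. supp_sum (u i) A)"
  by (induction I rule: finite_induct)
     (auto simp: supp_sum_def support_on_def supp_sum_add[unfolded supp_sum_def support_on_def]
        finite_support_on_sum[unfolded support_on_def])

lemma supp_sum_mono:
  assumes "finite (support_on A g)" "\<And>x. x \<in> A \<Longrightarrow> 0 \<le> f x" "\<And>x. x \<in> A \<Longrightarrow> f x \<le> g x"
  shows "supp_sum f A \<le> (supp_sum g A :: real)"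
proof -
  have "supp_sum f A = (\<Sum>x\<in>support_on A g. f x)"
    by (rule supp_sum_eq_sum) (use assms in \<open>force simp: support_on_def\<close>)+
  also have "\<dots> \<le> (\<Sum>x\<in>support_on A g. g x)"
    using assms by (auto intro: sum_mono simp: support_on_def)
  finally show ?thesis by (simp add: supp_sum_def)
qed

lemma supp_sum_Times:
  assumes "finite (support_on (A \<times> C) g)"
  shows "supp_sum g (A \<times> C) = supp_sum (\<lambda>c. supp_sum (\<lambda>a. g (a, c)) A) C"
    and "supp_sum g (A \<times> C) = supp_sum (\<lambda>a. supp_sum (\<lambda>c. g (a, c)) C) A"
proof -
  define S1 where "S1 = fst ` support_on (A \<times> C) g"
  define S2 where "S2 = snd ` support_on (A \<times> C) g"
  have fin: "finite S1" "finite S2" using assms by (auto simp: S1_def S2_def)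
  have sub: "S1 \<subseteq> A" "S2 \<subseteq> C" by (auto simp: S1_def S2_def support_on_def)
  have zero: "g (a, c) = 0" if "a \<in> A" "c \<in> C" "a \<notin> S1 \<or> c \<notin> S2" for a c
    using that by (force simp: S1_def S2_def support_on_def image_iff)
  have total: "supp_sum g (A \<times> C) = (\<Sum>p\<in>S1 \<times> S2. g p)"
    by (rule supp_sum_eq_sum) (use fin sub zero in auto)
  have inner1: "supp_sum (\<lambda>a. g (a, c)) A = (\<Sum>a\<in>S1. g (a, c))" if "c \<in> C" for c
    by (rule supp_sum_eq_sum) (use fin sub zero that in auto)
  have inner2: "supp_sum (\<lambda>c. g (a, c)) C = (\<Sum>c\<in>S2. g (a, c))" if "a \<in> A" for a
    by (rule supp_sum_eq_sum) (use fin sub zero that in auto)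
  have "supp_sum (\<lambda>c. supp_sum (\<lambda>a. g (a, c)) A) C = (\<Sum>c\<in>S2. supp_sum (\<lambda>a. g (a, c)) A)"
    by (rule supp_sum_eq_sum) (use fin sub zero in \<open>auto simp: supp_sum_def support_on_def\<close>)
  also have "\<dots> = (\<Sum>c\<in>S2. \<Sum>a\<in>S1. g (a, c))"
    using inner1 sub by (auto intro: sum.cong)
  also have "\<dots> = (\<Sum>p\<in>S1 \<times> S2. g p)"
    by (subst sum.swap) (simp add: sum.cartesian_product)
  finally show "supp_sum g (A \<times> C) = supp_sum (\<lambda>c. supp_sum (\<lambda>a. g (a, c)) A) C"
    using total by simp
  have "supp_sum (\<lambda>a. supp_sum (\<lambda>c. g (a, c)) C) A = (\<Sum>a\<in>S1. supp_sum (\<lambda>c. g (a, c)) C)"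
    by (rule supp_sum_eq_sum) (use fin sub zero in \<open>auto simp: supp_sum_def support_on_def\<close>)
  also have "\<dots> = (\<Sum>a\<in>S1. \<Sum>c\<in>S2. g (a, c))"
    using inner2 sub by (auto intro: sum.cong)
  also have "\<dots> = (\<Sum>p\<in>S1 \<times> S2. g p)"
    by (simp add: sum.cartesian_product)
  finally show "supp_sum g (A \<times> C) = supp_sum (\<lambda>a. supp_sum (\<lambda>c. g (a, c)) C) A"
    using total by simp
qed

lemma l2norm_eq_supp_sum: "l2norm A v = sqrt (supp_sum (\<lambda>x. (cmod (v x))\<^sup>2) A)"
  unfolding l2norm_def supp_sum_def support_on_def by simp

lemma l2norm_nonneg: "l2norm A v \<ge> 0"
  unfolding l2norm_def by (auto intro!: sum_nonneg)

lemma l2norm_power2: "(l2norm A v)\<^sup>2 = supp_sum (\<lambda>x. (cmod (v x))\<^sup>2) A"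
  unfolding l2norm_eq_supp_sum by (simp add: supp_sum_nonneg)

lemma support_on_norm_power2 [simp]: "support_on A (\<lambda>x. (cmod (v x))\<^sup>2) = support_on A v"
  by (auto simp: support_on_def)

lemma l2norm_eq_L2_set:
  assumes "finite S" "S \<subseteq> A" "\<And>x. x \<in> A \<Longrightarrow> x \<notin> S \<Longrightarrow> v x = 0"
  shows "l2norm A v = L2_set (\<lambda>x. cmod (v x)) S"
  unfolding l2norm_eq_supp_sum L2_set_def using assms by (subst supp_sum_eq_sum[of S]) auto

lemma L2_set_le_l2norm:
  assumes "finite (support_on A v)" "finite S" "S \<subseteq> A"
  shows "L2_set (\<lambda>x. cmod (v x)) S \<le> l2norm A v"
proof -
  have "L2_set (\<lambda>x. cmod (v x)) S \<le> L2_set (\<lambda>x. cmod (v x)) (S \<union> support_on A v)"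
    unfolding L2_set_def using assms by (intro real_sqrt_le_mono sum_mono2) auto
  also have "\<dots> = l2norm A v"
    by (rule l2norm_eq_L2_set[symmetric]) (use assms in \<open>auto simp: support_on_def\<close>)
  finally show ?thesis .
qed

lemma l2norm_eq_0_iff:
  assumes "finite (support_on A v)"
  shows "l2norm A v = 0 \<longleftrightarrow> (\<forall>x\<in>A. v x = 0)"
proof -
  have "l2norm A v = L2_set (\<lambda>x. cmod (v x)) (support_on A v)"
    by (rule l2norm_eq_L2_set) (use assms in \<open>auto simp: support_on_def\<close>)
  also have "\<dots> = 0 \<longleftrightarrow> (\<forall>x\<in>support_on A v. cmod (v x) = 0)"
    by (rule L2_set_eq_0_iff[OF assms])
  also have "\<dots> \<longleftrightarrow> (\<forall>x\<in>A. v x = 0)"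
    by (auto simp: support_on_def)
  finally show ?thesis .
qed

lemma finite_support_l2norm_fiber:
  assumes "finite (support_on (I \<times> A) W)"
  shows "finite (support_on I (\<lambda>i. l2norm A (\<lambda>y. W (i, y))))"
proof (rule finite_subset[OF _ finite_imageI[OF assms, of fst]])
  show "support_on I (\<lambda>i. l2norm A (\<lambda>y. W (i, y))) \<subseteq> fst ` support_on (I \<times> A) W"
  proof
    fix i assume "i \<in> support_on I (\<lambda>i. l2norm A (\<lambda>y. W (i, y)))"
    then have i: "i \<in> I" "l2norm A (\<lambda>y. W (i, y)) \<noteq> 0"
      by (auto simp: support_on_def)
    have "\<exists>y\<in>A. W (i, y) \<noteq> 0"
    proof (rule ccontr)
      assume "\<not> (\<exists>y\<in>A. W (i, y) \<noteq> 0)"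
      then have "{y \<in> A. W (i, y) \<noteq> 0} = {}" by auto
      then show False using i(2) by (simp add: l2norm_def)
    qed
    then show "i \<in> fst ` support_on (I \<times> A) W"
      using i(1) by (force simp: support_on_def)
  qed
qed

lemma l2norm_cong: "(\<And>x. x \<in> A \<Longrightarrow> u x = v x) \<Longrightarrow> l2norm A u = l2norm A v"
  unfolding l2norm_def by (rule arg_cong[where f=sqrt], rule sum.cong) auto

lemma l2norm_mult_left: "l2norm A (\<lambda>x. c * v x) = cmod c * l2norm A v"
proof (cases "c = 0")
  case True then show ?thesis by (simp add: l2norm_def)
next
  case False
  have "{x\<in>A. c * v x \<noteq> 0} = {x\<in>A. v x \<noteq> 0}" using False by auto
  then show ?thesis using False
    by (simp add: l2norm_def norm_mult power_mult_distrib real_sqrt_mult sum_distrib_left[symmetric])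
qed

lemma l2norm_triangle:
  assumes "finite (support_on A u)" "finite (support_on A v)"
  shows "l2norm A (\<lambda>x. u x + v x) \<le> l2norm A u + l2norm A v"
proof -
  let ?S = "support_on A u \<union> support_on A v"
  have S: "finite ?S" "?S \<subseteq> A" using assms by (auto simp: support_on_def)
  have "l2norm A (\<lambda>x. u x + v x) = L2_set (\<lambda>x. cmod (u x + v x)) ?S"
    by (rule l2norm_eq_L2_set) (use S in \<open>auto simp: support_on_def\<close>)
  also have "\<dots> \<le> L2_set (\<lambda>x. cmod (u x) + cmod (v x)) ?S"
    by (rule L2_set_mono) (auto intro: norm_triangle_ineq)
  also have "\<dots> \<le> L2_set (\<lambda>x. cmod (u x)) ?S + L2_set (\<lambda>x. cmod (v x)) ?S"
    by (rule L2_set_triangle_ineq)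
  also have "L2_set (\<lambda>x. cmod (u x)) ?S = l2norm A u"
    by (rule l2norm_eq_L2_set[symmetric]) (use S in \<open>auto simp: support_on_def\<close>)
  also have "L2_set (\<lambda>x. cmod (v x)) ?S = l2norm A v"
    by (rule l2norm_eq_L2_set[symmetric]) (use S in \<open>auto simp: support_on_def\<close>)
  finally show ?thesis .
qed

lemma l2norm_sum_le:
  "finite I \<Longrightarrow> (\<And>i. i \<in> I \<Longrightarrow> finite (support_on A (u i))) \<Longrightarrow>
     l2norm A (\<lambda>x. \<Sum>i\<in>I. u i x) \<le> (\<Sum>i\<in>I. l2norm A (u i))"
proof (induction I rule: finite_induct)
  case empty then show ?case by (simp add: l2norm_def)
next
  case (insert i I)
  have "l2norm A (\<lambda>x. \<Sum>j\<in>insert i I. u j x) = l2norm A (\<lambda>x. u i x + (\<Sum>j\<in>I. u j x))"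
    using insert by simp
  also have "\<dots> \<le> l2norm A (u i) + l2norm A (\<lambda>x. \<Sum>j\<in>I. u j x)"
    by (rule l2norm_triangle) (use insert in \<open>auto intro: finite_support_on_sum\<close>)
  also have "\<dots> \<le> l2norm A (u i) + (\<Sum>j\<in>I. l2norm A (u j))"
    using insert by auto
  finally show ?case using insert by simp
qed

lemma l2norm_diff_le:
  assumes "finite (support_on A u)" "finite (support_on A v)"
  shows "l2norm A (\<lambda>x. u x - v x) \<le> l2norm A u + l2norm A v"
proof -
  have "finite (support_on A (\<lambda>x. - v x))"
    using assms(2) by (simp add: support_on_def)
  then have "l2norm A (\<lambda>x. u x + - v x) \<le> l2norm A u + l2norm A (\<lambda>x. - v x)"
    by (rule l2norm_triangle[OF assms(1)])
  moreover have "l2norm A (\<lambda>x. - v x) = l2norm A v"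
    by (simp add: l2norm_def)
  ultimately show ?thesis by simp
qed

section \<open>Abelian groups on a carrier and almost invariant vectors\<close>

lemma power2_sqrt_diff_le_abs_diff:
  assumes "a \<ge> 0" "b \<ge> 0"
  shows "(sqrt a - sqrt b)\<^sup>2 \<le> \<bar>a - b\<bar>"
proof -
  have "(sqrt a - sqrt b)\<^sup>2 = \<bar>sqrt a - sqrt b\<bar> * \<bar>sqrt a - sqrt b\<bar>"
    by (simp add: power2_eq_square)
  also have "\<dots> \<le> \<bar>sqrt a - sqrt b\<bar> * (sqrt a + sqrt b)"
    using assms by (intro mult_left_mono) (auto simp: abs_le_iff)
  also have "\<dots> = \<bar>(sqrt a - sqrt b) * (sqrt a + sqrt b)\<bar>"
    using assms by (simp add: abs_mult)
  also have "\<dots> = \<bar>a - b\<bar>"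
    using assms by (simp add: algebra_simps)
  finally show ?thesis .
qed

locale ab_group_on =
  fixes \<Gamma> :: "'c set" and mul :: "'c \<Rightarrow> 'c \<Rightarrow> 'c" and ginv :: "'c \<Rightarrow> 'c" and e :: 'c
  assumes mul_closed [simp]: "x \<in> \<Gamma> \<Longrightarrow> y \<in> \<Gamma> \<Longrightarrow> mul x y \<in> \<Gamma>"
    and inverse_closed [simp]: "x \<in> \<Gamma> \<Longrightarrow> ginv x \<in> \<Gamma>"
    and unit_closed [simp]: "e \<in> \<Gamma>"
    and mul_assoc: "x \<in> \<Gamma> \<Longrightarrow> y \<in> \<Gamma> \<Longrightarrow> z \<in> \<Gamma> \<Longrightarrow> mul (mul x y) z = mul x (mul y z)"
    and mul_commute: "x \<in> \<Gamma> \<Longrightarrow> y \<in> \<Gamma> \<Longrightarrow> mul x y = mul y x"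
    and mul_unit_left [simp]: "x \<in> \<Gamma> \<Longrightarrow> mul e x = x"
    and mul_inverse_left [simp]: "x \<in> \<Gamma> \<Longrightarrow> mul (ginv x) x = e"
begin

lemma mul_unit_right [simp]: "x \<in> \<Gamma> \<Longrightarrow> mul x e = x"
  using mul_commute[of x e] by simp

lemma mul_inverse_right [simp]: "x \<in> \<Gamma> \<Longrightarrow> mul x (ginv x) = e"
  using mul_commute[of x "ginv x"] by simp

lemma mul_inverse_cancel_left [simp]: "x \<in> \<Gamma> \<Longrightarrow> y \<in> \<Gamma> \<Longrightarrow> mul (ginv x) (mul x y) = y"
  by (simp add: mul_assoc[symmetric])

lemma mul_cancel_inverse_left [simp]: "x \<in> \<Gamma> \<Longrightarrow> y \<in> \<Gamma> \<Longrightarrow> mul x (mul (ginv x) y) = y"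
  by (simp add: mul_assoc[symmetric])

lemma mul_left_commute: "x \<in> \<Gamma> \<Longrightarrow> y \<in> \<Gamma> \<Longrightarrow> z \<in> \<Gamma> \<Longrightarrow> mul x (mul y z) = mul y (mul x z)"
  by (simp add: mul_assoc[symmetric] mul_commute[of x y])

lemma mul_left_cancel: "a \<in> \<Gamma> \<Longrightarrow> x \<in> \<Gamma> \<Longrightarrow> y \<in> \<Gamma> \<Longrightarrow> mul a x = mul a y \<Longrightarrow> x = y"
  by (metis mul_inverse_cancel_left)

lemma inverse_unique: "a \<in> \<Gamma> \<Longrightarrow> x \<in> \<Gamma> \<Longrightarrow> mul a x = e \<Longrightarrow> x = ginv a"
  by (metis mul_inverse_cancel_left mul_unit_right inverse_closed)

lemma left_quotient_eq_unit_iff: "a \<in> \<Gamma> \<Longrightarrow> x \<in> \<Gamma> \<Longrightarrow> mul (ginv a) x = e \<longleftrightarrow> a = x"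
  by (metis mul_cancel_inverse_left mul_unit_right mul_inverse_left)

lemma unit_eq_left_quotient_iff: "a \<in> \<Gamma> \<Longrightarrow> x \<in> \<Gamma> \<Longrightarrow> e = mul (ginv a) x \<longleftrightarrow> a = x"
  by (subst eq_commute) (rule left_quotient_eq_unit_iff)

lemma supp_sum_translate:
  assumes "a \<in> \<Gamma>"
  shows "supp_sum (\<lambda>x. g (mul a x)) \<Gamma> = supp_sum g \<Gamma>"
proof -
  have "bij_betw (mul a) (support_on \<Gamma> (\<lambda>x. g (mul a x))) (support_on \<Gamma> g)"
    by (rule bij_betw_byWitness[where f'="mul (ginv a)"])
       (use assms in \<open>auto simp: support_on_def image_iff intro!: bexI[where x="mul (ginv a) _"]\<close>)
  then show ?thesis unfolding supp_sum_def by (rule sum.reindex_bij_betw)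
qed

lemma l2norm_translate: "a \<in> \<Gamma> \<Longrightarrow> l2norm \<Gamma> (\<lambda>x. v (mul a x)) = l2norm \<Gamma> v"
  unfolding l2norm_eq_supp_sum by (subst supp_sum_translate[where g="\<lambda>x. (cmod (v x))\<^sup>2"]) auto

lemma finite_support_on_translate:
  assumes "a \<in> \<Gamma>" "finite (support_on \<Gamma> v)"
  shows "finite (support_on \<Gamma> (\<lambda>x. v (mul a x)))"
proof (rule finite_subset[OF _ finite_imageI[OF assms(2), of "mul (ginv a)"]])
  show "support_on \<Gamma> (\<lambda>x. v (mul a x)) \<subseteq> mul (ginv a) ` support_on \<Gamma> v"
  proof
    fix x assume "x \<in> support_on \<Gamma> (\<lambda>x. v (mul a x))"
    then have "x = mul (ginv a) (mul a x)" "mul a x \<in> support_on \<Gamma> v"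
      using assms(1) by (auto simp: support_on_def)
    then show "x \<in> mul (ginv a) ` support_on \<Gamma> v" by blast
  qed
qed

lemma finite_support_on_translate_diff:
  fixes v :: "'c \<Rightarrow> 'a::ab_group_add"
  assumes "b \<in> \<Gamma>" "finite (support_on \<Gamma> v)"
  shows "finite (support_on \<Gamma> (\<lambda>x. v (mul b x) - v x))"
  by (rule finite_subset[OF _ finite_UnI[OF finite_support_on_translate[OF assms] assms(2)]])
     (auto simp: support_on_def)

text \<open>Amenability by induction on the finite set \<open>B\<close>: averaging a probability \<open>\<mu>\<close> over the first
  \<open>m\<close> powers of a new element \<open>c\<close> makes it \<open>2/m\<close>-invariant under \<open>c\<close> without spoiling its
  almost invariance under the old elements, since translations commute.\<close>

abbreviation gpow :: "'c \<Rightarrow> nat \<Rightarrow> 'c" where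
  "gpow c k \<equiv> (mul c ^^ k) e"

lemma gpow_closed [simp]: "c \<in> \<Gamma> \<Longrightarrow> gpow c k \<in> \<Gamma>"
  by (induction k) auto

definition power_average :: "('c \<Rightarrow> real) \<Rightarrow> 'c \<Rightarrow> nat \<Rightarrow> 'c \<Rightarrow> real" where
  "power_average \<mu> c m x = (1 / real m) * (\<Sum>k<m. \<mu> (mul (gpow c k) x))"

lemma finite_support_power_average:
  assumes "c \<in> \<Gamma>" "finite (support_on \<Gamma> \<mu>)"
  shows "finite (support_on \<Gamma> (power_average \<mu> c m))"
  by (rule finite_subset[OF _ finite_support_on_sum[of "{..<m}" \<Gamma> "\<lambda>k x. \<mu> (mul (gpow c k) x)"]])
     (use assms in \<open>auto simp: power_average_def support_on_def intro: finite_support_on_translate[unfolded support_on_def]\<close>)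

lemma supp_sum_power_average:
  assumes "c \<in> \<Gamma>" "finite (support_on \<Gamma> \<mu>)" "m > 0"
  shows "supp_sum (power_average \<mu> c m) \<Gamma> = supp_sum \<mu> \<Gamma>"
proof -
  have "supp_sum (power_average \<mu> c m) \<Gamma> = (1 / real m) * (\<Sum>k<m. supp_sum (\<lambda>x. \<mu> (mul (gpow c k) x)) \<Gamma>)"
    unfolding power_average_def supp_sum_mult_left
    by (subst supp_sum_sum) (use assms in \<open>auto intro: finite_support_on_translate\<close>)
  then show ?thesis using assms by (simp add: supp_sum_translate)
qed

lemma power_average_variation_le:
  assumes "b \<in> \<Gamma>" "c \<in> \<Gamma>" "finite (support_on \<Gamma> \<mu>)" "m > 0"
  shows "supp_sum (\<lambda>x. \<bar>power_average \<mu> c m (mul b x) - power_average \<mu> c m x\<bar>) \<Gamma>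
           \<le> supp_sum (\<lambda>x. \<bar>\<mu> (mul b x) - \<mu> x\<bar>) \<Gamma>"
proof -
  define g where "g = (\<lambda>y. \<bar>\<mu> (mul b y) - \<mu> y\<bar>)"
  have fin_g: "finite (support_on \<Gamma> g)"
    unfolding g_def by (rule finite_subset[OF _ finite_support_on_translate_diff[OF assms(1,3)]])
      (auto simp: support_on_def)
  have fin_gk: "finite (support_on \<Gamma> (\<lambda>x. g (mul (gpow c k) x)))" for k
    using fin_g assms(2) by (intro finite_support_on_translate) auto
  have "supp_sum (\<lambda>x. \<bar>power_average \<mu> c m (mul b x) - power_average \<mu> c m x\<bar>) \<Gamma>
      \<le> supp_sum (\<lambda>x. (1 / real m) * (\<Sum>k<m. g (mul (gpow c k) x))) \<Gamma>"
  proof (rule supp_sum_mono)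
    show "finite (support_on \<Gamma> (\<lambda>x. (1 / real m) * (\<Sum>k<m. g (mul (gpow c k) x))))"
      by (rule finite_subset[OF _ finite_support_on_sum[of "{..<m}" \<Gamma> "\<lambda>k x. g (mul (gpow c k) x)"]])
         (use fin_gk in \<open>auto simp: support_on_def\<close>)
    fix x assume x: "x \<in> \<Gamma>"
    have "power_average \<mu> c m (mul b x) - power_average \<mu> c m x
        = (1 / real m) * (\<Sum>k<m. \<mu> (mul b (mul (gpow c k) x)) - \<mu> (mul (gpow c k) x))"
      using assms x
      by (simp add: power_average_def sum_subtractf right_diff_distrib mul_left_commute[of "gpow c _" b x])
    also have "\<bar>\<dots>\<bar> \<le> (1 / real m) * (\<Sum>k<m. g (mul (gpow c k) x))"
      unfolding g_def abs_mult by (intro mult_mono sum_abs) auto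
    finally show "\<bar>power_average \<mu> c m (mul b x) - power_average \<mu> c m x\<bar>
        \<le> (1 / real m) * (\<Sum>k<m. g (mul (gpow c k) x))" .
  qed simp
  also have "\<dots> = (1 / real m) * (\<Sum>k<m. supp_sum g \<Gamma>)"
    unfolding supp_sum_mult_left using fin_gk assms by (simp add: supp_sum_sum supp_sum_translate)
  also have "\<dots> = supp_sum g \<Gamma>" using assms by simp
  finally show ?thesis unfolding g_def .
qed

lemma power_average_variation_generator:
  assumes "c \<in> \<Gamma>" "finite (support_on \<Gamma> \<mu>)" "\<forall>x\<in>\<Gamma>. \<mu> x \<ge> 0" "supp_sum \<mu> \<Gamma> = 1" "m > 0"
  shows "supp_sum (\<lambda>x. \<bar>power_average \<mu> c m (mul c x) - power_average \<mu> c m x\<bar>) \<Gamma> \<le> 2 / real m"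
proof -
  have telescope: "power_average \<mu> c m (mul c x) - power_average \<mu> c m x
      = (1 / real m) * (\<mu> (mul (gpow c m) x) - \<mu> x)" if x: "x \<in> \<Gamma>" for x
  proof -
    have "(\<Sum>k<m. \<mu> (mul (gpow c k) (mul c x))) - (\<Sum>k<m. \<mu> (mul (gpow c k) x))
        = (\<Sum>k<m. \<mu> (mul (gpow c (Suc k)) x) - \<mu> (mul (gpow c k) x))"
      using assms x by (simp add: sum_subtractf mul_assoc mul_left_commute)
    also have "\<dots> = \<mu> (mul (gpow c m) x) - \<mu> x"
      using x by (subst sum_lessThan_telescope) simp
    finally show ?thesis
      unfolding power_average_def by (simp only: right_diff_distrib[symmetric])
  qed
  have fin1: "finite (support_on \<Gamma> (\<lambda>x. \<bar>\<mu> (mul (gpow c m) x)\<bar>))"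
    by (rule finite_subset[OF _ finite_support_on_translate[OF gpow_closed[OF assms(1)] assms(2)]])
       (auto simp: support_on_def)
  have fin2: "finite (support_on \<Gamma> (\<lambda>x. \<bar>\<mu> x\<bar>))"
    by (rule finite_subset[OF _ assms(2)]) (auto simp: support_on_def)
  have mass: "supp_sum (\<lambda>x. \<bar>\<mu> x\<bar>) \<Gamma> = 1" "supp_sum (\<lambda>x. \<bar>\<mu> (mul (gpow c m) x)\<bar>) \<Gamma> = 1"
    using assms supp_sum_cong[of \<Gamma> "\<lambda>x. \<bar>\<mu> x\<bar>" \<mu>] supp_sum_translate[of "gpow c m" "\<lambda>x. \<bar>\<mu> x\<bar>"]
    by auto
  have "supp_sum (\<lambda>x. \<bar>power_average \<mu> c m (mul c x) - power_average \<mu> c m x\<bar>) \<Gamma>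
      \<le> supp_sum (\<lambda>x. (1 / real m) * (\<bar>\<mu> (mul (gpow c m) x)\<bar> + \<bar>\<mu> x\<bar>)) \<Gamma>"
  proof (rule supp_sum_mono)
    show "finite (support_on \<Gamma> (\<lambda>x. (1 / real m) * (\<bar>\<mu> (mul (gpow c m) x)\<bar> + \<bar>\<mu> x\<bar>)))"
      by (rule finite_subset[OF _ finite_support_on_add[OF fin1 fin2]]) (auto simp: support_on_def)
  next
    fix x assume "x \<in> \<Gamma>"
    then show "\<bar>power_average \<mu> c m (mul c x) - power_average \<mu> c m x\<bar>
        \<le> (1 / real m) * (\<bar>\<mu> (mul (gpow c m) x)\<bar> + \<bar>\<mu> x\<bar>)"
      unfolding telescope[OF \<open>x \<in> \<Gamma>\<close>] abs_mult
      by (intro mult_mono abs_triangle_ineq4) auto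
  qed simp
  also have "\<dots> = 2 / real m"
    by (simp only: supp_sum_mult_left supp_sum_add[OF fin1 fin2] mass) simp
  finally show ?thesis .
qed

lemma almost_invariant_probability_exists:
  assumes "finite B" "B \<subseteq> \<Gamma>" "\<delta> > 0"
  shows "\<exists>\<mu>::'c \<Rightarrow> real. finite (support_on \<Gamma> \<mu>) \<and> (\<forall>x\<in>\<Gamma>. \<mu> x \<ge> 0) \<and> supp_sum \<mu> \<Gamma> = 1 \<and>
           (\<forall>b\<in>B. supp_sum (\<lambda>x. \<bar>\<mu> (mul b x) - \<mu> x\<bar>) \<Gamma> \<le> \<delta>)"
  using assms(1,2)
proof (induction B rule: finite_induct)
  case empty
  define \<mu> where "\<mu> = (\<lambda>x. if x = e then (1::real) else 0)"
  have "finite (support_on \<Gamma> \<mu>)" by (rule finite_subset[of _ "{e}"]) (auto simp: \<mu>_def support_on_def)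
  moreover have "supp_sum \<mu> \<Gamma> = 1" by (subst supp_sum_eq_sum[of "{e}"]) (auto simp: \<mu>_def)
  ultimately show ?case by (intro exI[of _ \<mu>]) (auto simp: \<mu>_def)
next
  case (insert c B)
  then obtain \<mu> :: "'c \<Rightarrow> real" where \<mu>: "finite (support_on \<Gamma> \<mu>)" "\<forall>x\<in>\<Gamma>. \<mu> x \<ge> 0"
      "supp_sum \<mu> \<Gamma> = 1" "\<forall>b\<in>B. supp_sum (\<lambda>x. \<bar>\<mu> (mul b x) - \<mu> x\<bar>) \<Gamma> \<le> \<delta>" by auto
  have c: "c \<in> \<Gamma>" using insert by auto
  obtain m :: nat where m: "2 / \<delta> < real m" using reals_Archimedean2 by blast
  have m_pos: "m > 0"
    using m assms(3) by (cases m) (auto simp: not_less[symmetric])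
  define \<nu> where "\<nu> = power_average \<mu> c m"
  have "finite (support_on \<Gamma> \<nu>)"
    unfolding \<nu>_def using c \<mu>(1) by (rule finite_support_power_average)
  moreover have "\<forall>x\<in>\<Gamma>. \<nu> x \<ge> 0"
    using \<mu>(2) c by (auto simp: \<nu>_def power_average_def intro!: divide_nonneg_nonneg sum_nonneg)
  moreover have "supp_sum \<nu> \<Gamma> = 1"
    unfolding \<nu>_def using c \<mu>(1,3) m_pos by (simp add: supp_sum_power_average)
  moreover have "supp_sum (\<lambda>x. \<bar>\<nu> (mul b x) - \<nu> x\<bar>) \<Gamma> \<le> \<delta>" if b: "b \<in> insert c B" for b
  proof (cases "b = c")
    case True
    have "2 / real m \<le> \<delta>" using m assms(3) m_pos by (simp add: field_simps)
    then show ?thesis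
      unfolding True \<nu>_def using power_average_variation_generator[OF c \<mu>(1,2,3) m_pos] by linarith
  next
    case False
    then have "b \<in> B" "b \<in> \<Gamma>" using b insert by auto
    then show ?thesis
      unfolding \<nu>_def using power_average_variation_le[OF _ c \<mu>(1) m_pos, of b] \<mu>(4) by fastforce
  qed
  ultimately show ?case by blast
qed

lemma almost_invariant_unit_vector_exists:
  assumes "finite B" "B \<subseteq> \<Gamma>" "\<delta> > 0"
  shows "\<exists>\<eta>::'c \<Rightarrow> complex. finite (support_on \<Gamma> \<eta>) \<and> l2norm \<Gamma> \<eta> = 1 \<and>
           (\<forall>b\<in>B. l2norm \<Gamma> (\<lambda>x. \<eta> (mul b x) - \<eta> x) \<le> \<delta>)"
proof -
  obtain \<mu> :: "'c \<Rightarrow> real" where \<mu>: "finite (support_on \<Gamma> \<mu>)" "\<forall>x\<in>\<Gamma>. \<mu> x \<ge> 0" "supp_sum \<mu> \<Gamma> = 1"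
      "\<forall>b\<in>B. supp_sum (\<lambda>x. \<bar>\<mu> (mul b x) - \<mu> x\<bar>) \<Gamma> \<le> \<delta>\<^sup>2"
    using almost_invariant_probability_exists[OF assms(1,2), of "\<delta>\<^sup>2"] assms(3) by auto
  define \<eta> where "\<eta> = (\<lambda>x. complex_of_real (sqrt (\<mu> x)))"
  have "finite (support_on \<Gamma> \<eta>)"
    by (rule finite_subset[OF _ \<mu>(1)]) (auto simp: support_on_def \<eta>_def)
  moreover have "l2norm \<Gamma> \<eta> = 1"
    unfolding l2norm_eq_supp_sum using \<mu>(2,3) by (subst supp_sum_cong[of _ _ \<mu>]) (auto simp: \<eta>_def)
  moreover have "l2norm \<Gamma> (\<lambda>x. \<eta> (mul b x) - \<eta> x) \<le> \<delta>" if b: "b \<in> B" for b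
  proof -
    have "supp_sum (\<lambda>x. (cmod (\<eta> (mul b x) - \<eta> x))\<^sup>2) \<Gamma> \<le> supp_sum (\<lambda>x. \<bar>\<mu> (mul b x) - \<mu> x\<bar>) \<Gamma>"
    proof (rule supp_sum_mono)
      show "finite (support_on \<Gamma> (\<lambda>x. \<bar>\<mu> (mul b x) - \<mu> x\<bar>))"
        by (rule finite_subset[OF _ finite_support_on_translate_diff[OF _ \<mu>(1)]])
           (use b assms(2) in \<open>auto simp: support_on_def\<close>)
    next
      fix x assume x: "x \<in> \<Gamma>"
      have "cmod (\<eta> (mul b x) - \<eta> x) = \<bar>sqrt (\<mu> (mul b x)) - sqrt (\<mu> x)\<bar>"
        unfolding \<eta>_def by (simp only: of_real_diff[symmetric] norm_of_real)
      then show "(cmod (\<eta> (mul b x) - \<eta> x))\<^sup>2 \<le> \<bar>\<mu> (mul b x) - \<mu> x\<bar>"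
        using power2_sqrt_diff_le_abs_diff[of "\<mu> (mul b x)" "\<mu> x"] \<mu>(2) x b assms(2) by auto
    qed simp
    also have "\<dots> \<le> \<delta>\<^sup>2" using \<mu>(4) b by auto
    finally show ?thesis
      unfolding l2norm_eq_supp_sum using assms(3) real_sqrt_le_mono by fastforce
  qed
  ultimately show ?thesis by blast
qed

end

section \<open>Twisted convolution and the reduced twisted C*-norm\<close>

locale twisted_ab_group = ab_group_on \<Gamma> mul ginv e
  for \<Gamma> :: "'c set" and mul ginv e +
  fixes \<sigma> :: "'c \<Rightarrow> 'c \<Rightarrow> complex"
  assumes skew: "skew_bichar \<Gamma> mul \<sigma>"
begin

lemma bichar_norm [simp]: "a \<in> \<Gamma> \<Longrightarrow> b \<in> \<Gamma> \<Longrightarrow> cmod (\<sigma> a b) = 1"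
  using skew by (auto simp: skew_bichar_def)

lemma bichar_mult_left: "a \<in> \<Gamma> \<Longrightarrow> b \<in> \<Gamma> \<Longrightarrow> c \<in> \<Gamma> \<Longrightarrow> \<sigma> (mul a b) c = \<sigma> a c * \<sigma> b c"
  using skew by (auto simp: skew_bichar_def)

lemma bichar_mult_right: "a \<in> \<Gamma> \<Longrightarrow> b \<in> \<Gamma> \<Longrightarrow> c \<in> \<Gamma> \<Longrightarrow> \<sigma> a (mul b c) = \<sigma> a b * \<sigma> a c"
  using skew by (auto simp: skew_bichar_def)

lemma bichar_self [simp]: "a \<in> \<Gamma> \<Longrightarrow> \<sigma> a a = 1"
  using skew by (auto simp: skew_bichar_def)

lemma bichar_unit_right [simp]: "a \<in> \<Gamma> \<Longrightarrow> \<sigma> a e = 1"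
proof -
  assume a: "a \<in> \<Gamma>"
  have "\<sigma> a e = \<sigma> a e * \<sigma> a e"
    using bichar_mult_right[of a e e] a by simp
  moreover have "cmod (\<sigma> a e) = 1"
    using a by simp
  then have "\<sigma> a e \<noteq> 0"
    by auto
  ultimately show ?thesis by simp
qed

lemma bichar_antisym: "a \<in> \<Gamma> \<Longrightarrow> b \<in> \<Gamma> \<Longrightarrow> \<sigma> a b * \<sigma> b a = 1"
proof -
  assume ab: "a \<in> \<Gamma>" "b \<in> \<Gamma>"
  have "1 = \<sigma> (mul a b) (mul a b)" using ab by simp
  also have "\<dots> = \<sigma> a a * \<sigma> b a * (\<sigma> a b * \<sigma> b b)"
    using ab by (simp only: bichar_mult_left bichar_mult_right mul_closed)
  finally show ?thesis using ab by (simp add: ac_simps)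
qed

lemma bichar_inverse_right: "a \<in> \<Gamma> \<Longrightarrow> b \<in> \<Gamma> \<Longrightarrow> \<sigma> a (ginv b) = \<sigma> b a"
proof -
  assume ab: "a \<in> \<Gamma>" "b \<in> \<Gamma>"
  have "\<sigma> a (ginv b) * \<sigma> a b = 1"
    using ab bichar_mult_right[of a "ginv b" b] by simp
  moreover have "\<sigma> b a * \<sigma> a b = 1"
    using bichar_antisym[OF ab] by (simp add: mult.commute)
  ultimately have "\<sigma> a (ginv b) * \<sigma> a b = \<sigma> b a * \<sigma> a b"
    by simp
  moreover have "cmod (\<sigma> a b) = 1"
    using ab by simp
  then have "\<sigma> a b \<noteq> 0"
    by auto
  ultimately show ?thesis by simp
qed

lemma bichar_translate_right: "b \<in> \<Gamma> \<Longrightarrow> x \<in> \<Gamma> \<Longrightarrow> \<sigma> b (mul (ginv b) x) = \<sigma> b x"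
  by (simp add: bichar_mult_right bichar_inverse_right)

abbreviation conv :: "('c \<Rightarrow> complex) \<Rightarrow> ('c \<Rightarrow> complex) \<Rightarrow> 'c \<Rightarrow> complex" where
  "conv \<equiv> tw_conv \<Gamma> mul ginv \<sigma>"

abbreviation tnorm :: "('c \<Rightarrow> complex) \<Rightarrow> real" where
  "tnorm \<equiv> cstar_norm \<Gamma> mul ginv \<sigma>"

lemma tw_conv_eq_sum:
  assumes "finite S" "S \<subseteq> \<Gamma>" "\<And>x. x \<in> \<Gamma> \<Longrightarrow> x \<notin> S \<Longrightarrow> f x = 0"
  shows "conv f \<xi> \<gamma> = (\<Sum>b\<in>S. f b * \<xi> (mul (ginv b) \<gamma>) * \<sigma> b (mul (ginv b) \<gamma>))"
  unfolding tw_conv_def by (rule sum.mono_neutral_left) (use assms in auto)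

lemma tw_conv_eq_sum_support:
  "finite (support_on \<Gamma> f) \<Longrightarrow>
     conv f \<xi> \<gamma> = (\<Sum>b\<in>support_on \<Gamma> f. f b * \<xi> (mul (ginv b) \<gamma>) * \<sigma> b (mul (ginv b) \<gamma>))"
  by (rule tw_conv_eq_sum) (auto simp: support_on_def)

lemma cstar_norm_cong: "(\<And>x. x \<in> \<Gamma> \<Longrightarrow> f x = f' x) \<Longrightarrow> tnorm f = tnorm f'"
proof -
  assume eq: "\<And>x. x \<in> \<Gamma> \<Longrightarrow> f x = f' x"
  then have "{\<gamma>' \<in> \<Gamma>. f \<gamma>' \<noteq> 0} = {\<gamma>' \<in> \<Gamma>. f' \<gamma>' \<noteq> 0}" by auto
  then have "conv f = conv f'"
    unfolding tw_conv_def using eq by (intro ext sum.cong) auto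
  then show ?thesis by (simp add: cstar_norm_def)
qed

lemma finite_support_tw_conv:
  assumes "finite (support_on \<Gamma> f)" "finite (support_on \<Gamma> \<xi>)"
  shows "finite (support_on \<Gamma> (conv f \<xi>))"
proof (rule finite_subset[OF _ finite_imageI[OF finite_cartesian_product[OF assms]]])
  show "support_on \<Gamma> (conv f \<xi>) \<subseteq> (\<lambda>(b, s). mul b s) ` (support_on \<Gamma> f \<times> support_on \<Gamma> \<xi>)"
  proof
    fix \<gamma> assume \<gamma>: "\<gamma> \<in> support_on \<Gamma> (conv f \<xi>)"
    then have "conv f \<xi> \<gamma> \<noteq> 0"
      by (simp add: support_on_def)
    then obtain b where "b \<in> support_on \<Gamma> f" "f b * \<xi> (mul (ginv b) \<gamma>) * \<sigma> b (mul (ginv b) \<gamma>) \<noteq> 0"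
      unfolding tw_conv_eq_sum_support[OF assms(1)] by (meson sum.not_neutral_contains_not_neutral)
    then have b: "b \<in> support_on \<Gamma> f" "\<xi> (mul (ginv b) \<gamma>) \<noteq> 0"
      by auto
    then have "\<gamma> = (\<lambda>(b, s). mul b s) (b, mul (ginv b) \<gamma>)"
      using \<gamma> by (auto simp: support_on_def)
    moreover have "(b, mul (ginv b) \<gamma>) \<in> support_on \<Gamma> f \<times> support_on \<Gamma> \<xi>"
      using b \<gamma> by (auto simp: support_on_def)
    ultimately show "\<gamma> \<in> (\<lambda>(b, s). mul b s) ` (support_on \<Gamma> f \<times> support_on \<Gamma> \<xi>)"
      by (rule image_eqI)
  qed
qed

lemma l2norm_tw_conv_le_l1:
  assumes f: "finite (support_on \<Gamma> f)" and \<xi>: "finite (support_on \<Gamma> \<xi>)"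
  shows "l2norm \<Gamma> (conv f \<xi>) \<le> (\<Sum>b\<in>support_on \<Gamma> f. cmod (f b)) * l2norm \<Gamma> \<xi>"
proof -
  let ?u = "\<lambda>b \<gamma>. f b * \<xi> (mul (ginv b) \<gamma>) * \<sigma> b (mul (ginv b) \<gamma>)"
  have "l2norm \<Gamma> (conv f \<xi>) = l2norm \<Gamma> (\<lambda>\<gamma>. \<Sum>b\<in>support_on \<Gamma> f. ?u b \<gamma>)"
    by (intro l2norm_cong tw_conv_eq_sum_support[OF f])
  also have "\<dots> \<le> (\<Sum>b\<in>support_on \<Gamma> f. l2norm \<Gamma> (?u b))"
  proof (rule l2norm_sum_le[OF f])
    fix b assume "b \<in> support_on \<Gamma> f"
    then have "finite (support_on \<Gamma> (\<lambda>x. \<xi> (mul (ginv b) x)))"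
      by (intro finite_support_on_translate[OF _ \<xi>]) (simp add: support_on_def)
    then show "finite (support_on \<Gamma> (?u b))"
      by (rule finite_subset[rotated]) (auto simp: support_on_def)
  qed
  also have "\<dots> = (\<Sum>b\<in>support_on \<Gamma> f. cmod (f b) * l2norm \<Gamma> \<xi>)"
  proof (rule sum.cong[OF refl])
    fix b assume b: "b \<in> support_on \<Gamma> f"
    then have "l2norm \<Gamma> (?u b) = l2norm \<Gamma> (\<lambda>\<gamma>. f b * \<xi> (mul (ginv b) \<gamma>))"
      unfolding l2norm_eq_supp_sum
      by (intro arg_cong[where f=sqrt] supp_sum_cong) (simp add: support_on_def norm_mult)
    also have "\<dots> = cmod (f b) * l2norm \<Gamma> \<xi>"
      using b by (simp add: l2norm_mult_left l2norm_translate support_on_def)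
    finally show "l2norm \<Gamma> (?u b) = cmod (f b) * l2norm \<Gamma> \<xi>" .
  qed
  finally show ?thesis by (simp add: sum_distrib_right)
qed

lemma cstar_norm_eq_Sup:
  "tnorm f = Sup {l2norm \<Gamma> (conv f \<xi>) | \<xi>. finite (support_on \<Gamma> \<xi>) \<and> l2norm \<Gamma> \<xi> \<le> 1}"
  by (simp add: cstar_norm_def support_on_def)

lemma cstar_norm_set_nonempty:
  "{l2norm \<Gamma> (conv f \<xi>) | \<xi>. finite (support_on \<Gamma> \<xi>) \<and> l2norm \<Gamma> \<xi> \<le> 1} \<noteq> {}"
proof -
  have "finite (support_on \<Gamma> (\<lambda>_. 0 :: complex)) \<and> l2norm \<Gamma> (\<lambda>_. 0 :: complex) \<le> 1"
    by (simp add: l2norm_def support_on_def)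
  then show ?thesis by blast
qed

lemma cstar_norm_bdd_above:
  assumes "finite (support_on \<Gamma> f)"
  shows "bdd_above {l2norm \<Gamma> (conv f \<xi>) | \<xi>. finite (support_on \<Gamma> \<xi>) \<and> l2norm \<Gamma> \<xi> \<le> 1}"
proof (rule bdd_aboveI, safe)
  fix \<xi> assume \<xi>: "finite (support_on \<Gamma> \<xi>)" "l2norm \<Gamma> \<xi> \<le> 1"
  have "l2norm \<Gamma> (conv f \<xi>) \<le> (\<Sum>b\<in>support_on \<Gamma> f. cmod (f b)) * l2norm \<Gamma> \<xi>"
    using l2norm_tw_conv_le_l1[OF assms \<xi>(1)] .
  also have "\<dots> \<le> (\<Sum>b\<in>support_on \<Gamma> f. cmod (f b))"
    using \<xi>(2) by (simp add: mult_left_le sum_nonneg)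
  finally show "l2norm \<Gamma> (conv f \<xi>) \<le> (\<Sum>b\<in>support_on \<Gamma> f. cmod (f b))" .
qed

lemma cstar_norm_upper:
  assumes "finite (support_on \<Gamma> f)" "finite (support_on \<Gamma> \<xi>)" "l2norm \<Gamma> \<xi> \<le> 1"
  shows "l2norm \<Gamma> (conv f \<xi>) \<le> tnorm f"
  unfolding cstar_norm_eq_Sup
  by (rule cSup_upper, use assms(2,3) in blast, rule cstar_norm_bdd_above[OF assms(1)])

lemma cstar_norm_least:
  assumes "\<And>\<xi>. finite (support_on \<Gamma> \<xi>) \<Longrightarrow> l2norm \<Gamma> \<xi> \<le> 1 \<Longrightarrow> l2norm \<Gamma> (conv f \<xi>) \<le> M"
  shows "tnorm f \<le> M"
  unfolding cstar_norm_eq_Sup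
  by (rule cSup_least[OF cstar_norm_set_nonempty]) (auto intro: assms)

lemma cstar_norm_approx:
  assumes "finite (support_on \<Gamma> f)" "\<epsilon> > 0"
  obtains \<xi> where "finite (support_on \<Gamma> \<xi>)" "l2norm \<Gamma> \<xi> \<le> 1" "tnorm f - \<epsilon> < l2norm \<Gamma> (conv f \<xi>)"
proof -
  have "tnorm f - \<epsilon> < Sup {l2norm \<Gamma> (conv f \<xi>) | \<xi>. finite (support_on \<Gamma> \<xi>) \<and> l2norm \<Gamma> \<xi> \<le> 1}"
    using assms(2) by (simp flip: cstar_norm_eq_Sup)
  then obtain \<xi> where "finite (support_on \<Gamma> \<xi>)" "l2norm \<Gamma> \<xi> \<le> 1" "tnorm f - \<epsilon> < l2norm \<Gamma> (conv f \<xi>)"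
    by (auto simp: less_cSup_iff[OF cstar_norm_set_nonempty cstar_norm_bdd_above[OF assms(1)]])
  then show ?thesis by (rule that)
qed

lemma l2norm_tw_conv_le:
  assumes f: "finite (support_on \<Gamma> f)" and \<xi>: "finite (support_on \<Gamma> \<xi>)"
  shows "l2norm \<Gamma> (conv f \<xi>) \<le> tnorm f * l2norm \<Gamma> \<xi>"
proof (cases "l2norm \<Gamma> \<xi> = 0")
  case True
  then have "\<forall>x\<in>\<Gamma>. \<xi> x = 0"
    using l2norm_eq_0_iff[OF \<xi>] by simp
  then have "\<forall>\<gamma>\<in>\<Gamma>. conv f \<xi> \<gamma> = 0"
    unfolding tw_conv_def by (auto intro!: sum.neutral)
  then have "l2norm \<Gamma> (conv f \<xi>) = l2norm \<Gamma> (\<lambda>_. 0)"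
    by (intro l2norm_cong) auto
  then show ?thesis using True by (simp add: l2norm_def)
next
  case False
  let ?c = "complex_of_real (1 / l2norm \<Gamma> \<xi>)"
  have pos: "l2norm \<Gamma> \<xi> > 0" using False l2norm_nonneg[of \<Gamma> \<xi>] by simp
  have unit: "l2norm \<Gamma> (\<lambda>x. ?c * \<xi> x) = 1"
    using pos by (simp only: l2norm_mult_left) (simp add: norm_divide)
  have fin: "finite (support_on \<Gamma> (\<lambda>x. ?c * \<xi> x))"
    by (rule finite_subset[OF _ \<xi>]) (auto simp: support_on_def)
  have "conv f (\<lambda>x. ?c * \<xi> x) = (\<lambda>\<gamma>. ?c * conv f \<xi> \<gamma>)"
    unfolding tw_conv_def by (auto simp: sum_distrib_left intro!: sum.cong)
  then have "(1 / l2norm \<Gamma> \<xi>) * l2norm \<Gamma> (conv f \<xi>) \<le> tnorm f"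
    using cstar_norm_upper[OF f fin] unit pos by (simp only: l2norm_mult_left) (simp add: norm_divide)
  then show ?thesis using pos by (simp add: field_simps)
qed

lemma l2norm_le_cstar_norm:
  assumes f: "finite (support_on \<Gamma> f)"
  shows "l2norm \<Gamma> f \<le> tnorm f"
proof -
  define \<delta> where "\<delta> = (\<lambda>x. if x = e then (1::complex) else 0)"
  have fin: "finite (support_on \<Gamma> \<delta>)"
    by (rule finite_subset[of _ "{e}"]) (auto simp: \<delta>_def support_on_def)
  have unit: "l2norm \<Gamma> \<delta> = 1"
    by (subst l2norm_eq_L2_set[of "{e}"]) (auto simp: \<delta>_def)
  have "conv f \<delta> \<gamma> = f \<gamma>" if \<gamma>: "\<gamma> \<in> \<Gamma>" for \<gamma>
  proof -
    have "conv f \<delta> \<gamma> = (\<Sum>b\<in>insert \<gamma> (support_on \<Gamma> f). f b * \<delta> (mul (ginv b) \<gamma>) * \<sigma> b (mul (ginv b) \<gamma>))"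
      by (rule tw_conv_eq_sum) (use f \<gamma> in \<open>auto simp: support_on_def\<close>)
    also have "\<dots> = (\<Sum>b\<in>insert \<gamma> (support_on \<Gamma> f). if b = \<gamma> then f \<gamma> else 0)"
      by (rule sum.cong) (use \<gamma> in \<open>auto simp: \<delta>_def support_on_def left_quotient_eq_unit_iff unit_eq_left_quotient_iff\<close>)
    finally show ?thesis using f by simp
  qed
  then have "l2norm \<Gamma> (conv f \<delta>) = l2norm \<Gamma> f" by (intro l2norm_cong) auto
  then show ?thesis using cstar_norm_upper[OF f fin] unit by simp
qed

lemma cstar_norm_nonneg: "finite (support_on \<Gamma> f) \<Longrightarrow> tnorm f \<ge> 0"
  by (rule order_trans[OF l2norm_nonneg l2norm_le_cstar_norm])

lemma finite_support_fiberwise_tw_conv: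
  assumes "finite (support_on \<Gamma> h)" "finite (support_on (I \<times> \<Gamma>) W)"
  shows "finite (support_on (I \<times> \<Gamma>) (\<lambda>(i, x). conv h (\<lambda>y. W (i, y)) x))"
proof (rule finite_subset[OF _ finite_imageI[OF finite_cartesian_product[OF assms]]])
  show "support_on (I \<times> \<Gamma>) (\<lambda>(i, x). conv h (\<lambda>y. W (i, y)) x)
      \<subseteq> (\<lambda>(b, i, y). (i, mul b y)) ` (support_on \<Gamma> h \<times> support_on (I \<times> \<Gamma>) W)"
  proof
    fix p assume "p \<in> support_on (I \<times> \<Gamma>) (\<lambda>(i, x). conv h (\<lambda>y. W (i, y)) x)"
    then obtain i x where p: "p = (i, x)" "i \<in> I" "x \<in> \<Gamma>" "conv h (\<lambda>y. W (i, y)) x \<noteq> 0"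
      by (auto simp: support_on_def)
    then obtain b where "b \<in> support_on \<Gamma> h" "h b * W (i, mul (ginv b) x) * \<sigma> b (mul (ginv b) x) \<noteq> 0"
      unfolding tw_conv_eq_sum_support[OF assms(1)] by (meson sum.not_neutral_contains_not_neutral)
    then have b: "b \<in> support_on \<Gamma> h" "b \<in> \<Gamma>" "W (i, mul (ginv b) x) \<noteq> 0"
      by (auto simp: support_on_def)
    have "p = (\<lambda>(b, i, y). (i, mul b y)) (b, i, mul (ginv b) x)"
      using p b by simp
    moreover have "(b, i, mul (ginv b) x) \<in> support_on \<Gamma> h \<times> support_on (I \<times> \<Gamma>) W"
      using p b by (simp add: support_on_def)
    ultimately show "p \<in> (\<lambda>(b, i, y). (i, mul b y)) ` (support_on \<Gamma> h \<times> support_on (I \<times> \<Gamma>) W)"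
      by (rule image_eqI)
  qed
qed

lemma l2norm_fiberwise_tw_conv_le:
  assumes h: "finite (support_on \<Gamma> h)" and W: "finite (support_on (I \<times> \<Gamma>) W)"
  shows "l2norm (I \<times> \<Gamma>) (\<lambda>(i, x). conv h (\<lambda>y. W (i, y)) x) \<le> tnorm h * l2norm (I \<times> \<Gamma>) W"
proof -
  have fiber: "finite (support_on \<Gamma> (\<lambda>y. W (i, y)))" if "i \<in> I" for i
    by (rule finite_subset[OF _ finite_imageI[OF W, of snd]]) (use that in \<open>force simp: support_on_def\<close>)
  have fin_norms: "finite (support_on I (\<lambda>i. (tnorm h)\<^sup>2 * (l2norm \<Gamma> (\<lambda>y. W (i, y)))\<^sup>2))"
    by (rule finite_subset[OF _ finite_support_l2norm_fiber[OF W]]) (auto simp: support_on_def)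
  have "(l2norm (I \<times> \<Gamma>) (\<lambda>(i, x). conv h (\<lambda>y. W (i, y)) x))\<^sup>2
      = supp_sum (\<lambda>i. (l2norm \<Gamma> (conv h (\<lambda>y. W (i, y))))\<^sup>2) I"
    unfolding l2norm_power2
    by (subst supp_sum_Times(2)) (simp_all add: finite_support_fiberwise_tw_conv[OF h W])
  also have "\<dots> \<le> supp_sum (\<lambda>i. (tnorm h)\<^sup>2 * (l2norm \<Gamma> (\<lambda>y. W (i, y)))\<^sup>2) I"
  proof (rule supp_sum_mono[OF fin_norms])
    fix i assume "i \<in> I"
    then have "l2norm \<Gamma> (conv h (\<lambda>y. W (i, y))) \<le> tnorm h * l2norm \<Gamma> (\<lambda>y. W (i, y))"
      by (intro l2norm_tw_conv_le h fiber)
    then show "(l2norm \<Gamma> (conv h (\<lambda>y. W (i, y))))\<^sup>2 \<le> (tnorm h)\<^sup>2 * (l2norm \<Gamma> (\<lambda>y. W (i, y)))\<^sup>2"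
      by (simp add: l2norm_nonneg power_mono flip: power_mult_distrib)
  qed simp
  also have "\<dots> = (tnorm h * l2norm (I \<times> \<Gamma>) W)\<^sup>2"
    unfolding supp_sum_mult_left power_mult_distrib l2norm_power2
    by (subst supp_sum_Times(2)) (simp_all add: W)
  finally show ?thesis
    by (rule power2_le_imp_le) (simp add: cstar_norm_nonneg[OF h] l2norm_nonneg)
qed

end

section \<open>Comparing twisted norms along a quotient map\<close>

locale twisted_quotient =
  G: twisted_ab_group \<Gamma> mul ginv e \<sigma> + K: twisted_ab_group \<Gamma>' mul' ginv' e' \<sigma>'
  for \<Gamma> :: "'c set" and mul ginv e \<sigma> and \<Gamma>' :: "'d set" and mul' ginv' e' \<sigma>' +
  fixes q :: "'c \<Rightarrow> 'd"
  assumes q_closed [simp]: "x \<in> \<Gamma> \<Longrightarrow> q x \<in> \<Gamma>'"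
    and q_mul: "x \<in> \<Gamma> \<Longrightarrow> y \<in> \<Gamma> \<Longrightarrow> q (mul x y) = mul' (q x) (q y)"
begin

lemma q_unit [simp]: "q e = e'"
  using q_mul[of e e] K.mul_left_cancel[of "q e" "q e" e'] by simp

lemma q_inverse: "x \<in> \<Gamma> \<Longrightarrow> q (ginv x) = ginv' (q x)"
  using q_mul[of x "ginv x"] K.inverse_unique[of "q x" "q (ginv x)"] by simp

lemma q_left_quotient: "b \<in> \<Gamma> \<Longrightarrow> x \<in> \<Gamma> \<Longrightarrow> q (mul (ginv b) x) = mul' (ginv' (q b)) (q x)"
  by (simp add: q_mul q_inverse)

lemma finite_support_product_translate:
  assumes \<xi>: "finite (support_on \<Gamma>' \<xi>)" and u: "finite (support_on \<Gamma> u)" and c: "c \<in> \<Gamma>'"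
    and w: "\<And>\<gamma> x. \<gamma> \<in> \<Gamma>' \<Longrightarrow> x \<in> \<Gamma> \<Longrightarrow> cmod (w (\<gamma>, x)) = cmod (\<xi> (mul' c (mul' \<gamma> (q x)))) * cmod (u x)"
  shows "finite (support_on (\<Gamma>' \<times> \<Gamma>) w)"
proof -
  let ?Y = "mul' (ginv' c) ` support_on \<Gamma>' \<xi>"
  have "support_on (\<Gamma>' \<times> \<Gamma>) w \<subseteq> (\<lambda>(y, x). (mul' y (ginv' (q x)), x)) ` (?Y \<times> support_on \<Gamma> u)"
  proof
    fix p assume "p \<in> support_on (\<Gamma>' \<times> \<Gamma>) w"
    then obtain \<gamma> x where p: "p = (\<gamma>, x)" "\<gamma> \<in> \<Gamma>'" "x \<in> \<Gamma>" "w (\<gamma>, x) \<noteq> 0"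
      by (auto simp: support_on_def)
    then have nz: "\<xi> (mul' c (mul' \<gamma> (q x))) \<noteq> 0" "u x \<noteq> 0" using w[of \<gamma> x] by auto
    have "mul' \<gamma> (q x) = mul' (ginv' c) (mul' c (mul' \<gamma> (q x)))" using p c by simp
    then have "mul' \<gamma> (q x) \<in> ?Y"
      by (rule image_eqI) (use nz p c in \<open>simp add: support_on_def\<close>)
    then have "(mul' \<gamma> (q x), x) \<in> ?Y \<times> support_on \<Gamma> u"
      using nz p by (simp add: support_on_def)
    moreover have "p = (\<lambda>(y, x). (mul' y (ginv' (q x)), x)) (mul' \<gamma> (q x), x)"
      using p by (simp add: K.mul_assoc)
    ultimately show "p \<in> (\<lambda>(y, x). (mul' y (ginv' (q x)), x)) ` (?Y \<times> support_on \<Gamma> u)"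
      by (intro image_eqI)
  qed
  then show ?thesis
    by (rule finite_subset) (use \<xi> u in auto)
qed

lemma l2norm_product_translate:
  assumes \<xi>: "finite (support_on \<Gamma>' \<xi>)" and u: "finite (support_on \<Gamma> u)" and c: "c \<in> \<Gamma>'"
    and w: "\<And>\<gamma> x. \<gamma> \<in> \<Gamma>' \<Longrightarrow> x \<in> \<Gamma> \<Longrightarrow> cmod (w (\<gamma>, x)) = cmod (\<xi> (mul' c (mul' \<gamma> (q x)))) * cmod (u x)"
  shows "l2norm (\<Gamma>' \<times> \<Gamma>) w = l2norm \<Gamma>' \<xi> * l2norm \<Gamma> u"
proof -
  have fin: "finite (support_on (\<Gamma>' \<times> \<Gamma>) w)"
    by (rule finite_support_product_translate[OF assms])
  have "supp_sum (\<lambda>p. (cmod (w p))\<^sup>2) (\<Gamma>' \<times> \<Gamma>) = supp_sum (\<lambda>x. supp_sum (\<lambda>\<gamma>. (cmod (w (\<gamma>, x)))\<^sup>2) \<Gamma>') \<Gamma>"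
    by (rule supp_sum_Times(1)) (use fin in simp)
  also have "\<dots> = supp_sum (\<lambda>x. (l2norm \<Gamma>' \<xi>)\<^sup>2 * (cmod (u x))\<^sup>2) \<Gamma>"
  proof (rule supp_sum_cong)
    fix x assume x: "x \<in> \<Gamma>"
    have "supp_sum (\<lambda>\<gamma>. (cmod (w (\<gamma>, x)))\<^sup>2) \<Gamma>'
        = supp_sum (\<lambda>\<gamma>. (cmod (u x))\<^sup>2 * (cmod (\<xi> (mul' (mul' c (q x)) \<gamma>)))\<^sup>2) \<Gamma>'"
    proof (rule supp_sum_cong)
      fix \<gamma> assume "\<gamma> \<in> \<Gamma>'"
      then have "mul' c (mul' \<gamma> (q x)) = mul' (mul' c (q x)) \<gamma>"
        using x c by (simp add: K.mul_assoc K.mul_commute[of \<gamma> "q x"])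
      then show "(cmod (w (\<gamma>, x)))\<^sup>2 = (cmod (u x))\<^sup>2 * (cmod (\<xi> (mul' (mul' c (q x)) \<gamma>)))\<^sup>2"
        using w[OF \<open>\<gamma> \<in> \<Gamma>'\<close> x] by (simp add: power_mult_distrib)
    qed
    also have "\<dots> = (cmod (u x))\<^sup>2 * (l2norm \<Gamma>' \<xi>)\<^sup>2"
      using x c K.supp_sum_translate[of "mul' c (q x)" "\<lambda>\<gamma>. (cmod (\<xi> \<gamma>))\<^sup>2"]
      by (simp add: supp_sum_mult_left l2norm_power2)
    finally show "supp_sum (\<lambda>\<gamma>. (cmod (w (\<gamma>, x)))\<^sup>2) \<Gamma>' = (l2norm \<Gamma>' \<xi>)\<^sup>2 * (cmod (u x))\<^sup>2"
      by simp
  qed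
  also have "\<dots> = (l2norm \<Gamma>' \<xi> * l2norm \<Gamma> u)\<^sup>2"
    by (simp add: supp_sum_mult_left l2norm_power2 power_mult_distrib)
  finally show "l2norm (\<Gamma>' \<times> \<Gamma>) w = l2norm \<Gamma>' \<xi> * l2norm \<Gamma> u"
    unfolding l2norm_eq_supp_sum[of "\<Gamma>' \<times> \<Gamma>"] by (simp add: l2norm_nonneg)
qed

definition transfer :: "('c \<Rightarrow> complex) \<Rightarrow> ('d \<Rightarrow> complex) \<Rightarrow> 'd \<times> 'c \<Rightarrow> complex" where
  "transfer \<eta> \<xi> = (\<lambda>(\<gamma>, x). \<xi> (mul' \<gamma> (q x)) * \<eta> x * \<sigma>' \<gamma> (q x))"

definition transfer_defect :: "('c \<Rightarrow> complex) \<Rightarrow> 'c \<Rightarrow> 'c \<Rightarrow> complex" where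
  "transfer_defect \<eta> b x = \<eta> (mul (ginv b) x) * \<sigma> b x - \<eta> x * \<sigma>' (q b) (q x)"

definition transfer_error ::
    "('c \<Rightarrow> complex) \<Rightarrow> ('d \<Rightarrow> complex) \<Rightarrow> ('c \<Rightarrow> complex) \<Rightarrow> 'c \<Rightarrow> 'd \<times> 'c \<Rightarrow> complex" where
  "transfer_error \<eta> \<xi> h b = (\<lambda>(\<gamma>, x). h b * \<xi> (mul' (ginv' (q b)) (mul' \<gamma> (q x)))
      * \<sigma>' \<gamma> (q x) * \<sigma>' (q b) \<gamma> * transfer_defect \<eta> b x)"

lemma l2norm_transfer:
  assumes "finite (support_on \<Gamma>' \<xi>)" "finite (support_on \<Gamma> \<eta>)"
  shows "l2norm (\<Gamma>' \<times> \<Gamma>) (transfer \<eta> \<xi>) = l2norm \<Gamma>' \<xi> * l2norm \<Gamma> \<eta>"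
    and "finite (support_on (\<Gamma>' \<times> \<Gamma>) (transfer \<eta> \<xi>))"
  using l2norm_product_translate[OF assms K.unit_closed, of "transfer \<eta> \<xi>"]
    finite_support_product_translate[OF assms K.unit_closed, of "transfer \<eta> \<xi>"]
  by (auto simp: transfer_def norm_mult)

lemma transfer_tw_conv:
  assumes B: "finite B" "B \<subseteq> \<Gamma>" "inj_on q B"
    and h: "\<And>x. x \<in> \<Gamma> \<Longrightarrow> x \<notin> B \<Longrightarrow> h x = 0"
    and F: "\<And>b. b \<in> B \<Longrightarrow> F (q b) = h b" "\<And>\<psi>. \<psi> \<in> \<Gamma>' \<Longrightarrow> \<psi> \<notin> q ` B \<Longrightarrow> F \<psi> = 0"
    and \<gamma>: "\<gamma> \<in> \<Gamma>'" and x: "x \<in> \<Gamma>"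
  shows "transfer \<eta> (K.conv F \<xi>) (\<gamma>, x)
           = G.conv h (\<lambda>y. transfer \<eta> \<xi> (\<gamma>, y)) x - (\<Sum>b\<in>B. transfer_error \<eta> \<xi> h b (\<gamma>, x))"
proof -
  define Z where "Z b = mul' (ginv' (q b)) (mul' \<gamma> (q x))" for b
  have summand: "h b * \<xi> (Z b) * \<sigma>' (q b) (Z b) * \<eta> x * \<sigma>' \<gamma> (q x)
      = h b * transfer \<eta> \<xi> (\<gamma>, mul (ginv b) x) * \<sigma> b (mul (ginv b) x)
        - h b * \<xi> (Z b) * \<sigma>' \<gamma> (q x) * \<sigma>' (q b) \<gamma> * transfer_defect \<eta> b x" if "b \<in> B" for b
  proof -
    have b: "b \<in> \<Gamma>" using that B by auto
    have "mul' \<gamma> (q (mul (ginv b) x)) = Z b"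
      using b \<gamma> x by (simp add: q_left_quotient Z_def K.mul_left_commute[of \<gamma>])
    moreover have "\<sigma>' \<gamma> (q (mul (ginv b) x)) = \<sigma>' (q b) \<gamma> * \<sigma>' \<gamma> (q x)"
      using b \<gamma> x by (simp add: q_left_quotient K.bichar_mult_right K.bichar_inverse_right)
    moreover have "\<sigma>' (q b) (Z b) = \<sigma>' (q b) (mul' \<gamma> (q x))"
      unfolding Z_def using b \<gamma> x by (intro K.bichar_translate_right) auto
    moreover have "\<dots> = \<sigma>' (q b) \<gamma> * \<sigma>' (q b) (q x)"
      using b \<gamma> x by (intro K.bichar_mult_right) auto
    ultimately show ?thesis
      using b x by (simp add: transfer_def transfer_defect_def G.bichar_translate_right algebra_simps)
  qed
  have "K.conv F \<xi> (mul' \<gamma> (q x))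
      = (\<Sum>\<psi>\<in>q ` B. F \<psi> * \<xi> (mul' (ginv' \<psi>) (mul' \<gamma> (q x))) * \<sigma>' \<psi> (mul' (ginv' \<psi>) (mul' \<gamma> (q x))))"
    by (rule K.tw_conv_eq_sum) (use B F in auto)
  also have "\<dots> = (\<Sum>b\<in>B. h b * \<xi> (Z b) * \<sigma>' (q b) (Z b))"
    by (simp add: sum.reindex[OF B(3)] F Z_def)
  finally have "transfer \<eta> (K.conv F \<xi>) (\<gamma>, x) = (\<Sum>b\<in>B. h b * \<xi> (Z b) * \<sigma>' (q b) (Z b) * \<eta> x * \<sigma>' \<gamma> (q x))"
    by (simp add: transfer_def sum_distrib_right)
  also have "\<dots> = (\<Sum>b\<in>B. h b * transfer \<eta> \<xi> (\<gamma>, mul (ginv b) x) * \<sigma> b (mul (ginv b) x))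
      - (\<Sum>b\<in>B. h b * \<xi> (Z b) * \<sigma>' \<gamma> (q x) * \<sigma>' (q b) \<gamma> * transfer_defect \<eta> b x)"
    by (simp add: summand sum_subtractf)
  also have "(\<Sum>b\<in>B. h b * transfer \<eta> \<xi> (\<gamma>, mul (ginv b) x) * \<sigma> b (mul (ginv b) x))
      = G.conv h (\<lambda>y. transfer \<eta> \<xi> (\<gamma>, y)) x"
    by (rule G.tw_conv_eq_sum[symmetric]) (use B h in auto)
  finally show ?thesis by (simp add: Z_def transfer_error_def)
qed

lemma l2norm_transfer_defect_le:
  assumes "b \<in> \<Gamma>" "finite (support_on \<Gamma> \<eta>)"
  shows "l2norm \<Gamma> (transfer_defect \<eta> b)
           \<le> l2norm \<Gamma> (\<lambda>x. \<eta> (mul (ginv b) x) - \<eta> x) + l2norm \<Gamma> (\<lambda>x. \<eta> x * (\<sigma> b x - \<sigma>' (q b) (q x)))"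
proof -
  have fin1: "finite (support_on \<Gamma> (\<lambda>x. (\<eta> (mul (ginv b) x) - \<eta> x) * \<sigma> b x))"
    by (rule finite_subset[OF _ G.finite_support_on_translate_diff[OF _ assms(2), of "ginv b"]])
       (use assms in \<open>auto simp: support_on_def\<close>)
  have fin2: "finite (support_on \<Gamma> (\<lambda>x. \<eta> x * (\<sigma> b x - \<sigma>' (q b) (q x))))"
    by (rule finite_subset[OF _ assms(2)]) (auto simp: support_on_def)
  have "l2norm \<Gamma> (transfer_defect \<eta> b)
      = l2norm \<Gamma> (\<lambda>x. (\<eta> (mul (ginv b) x) - \<eta> x) * \<sigma> b x + \<eta> x * (\<sigma> b x - \<sigma>' (q b) (q x)))"
    by (rule l2norm_cong) (simp add: transfer_defect_def algebra_simps)
  also have "\<dots> \<le> l2norm \<Gamma> (\<lambda>x. (\<eta> (mul (ginv b) x) - \<eta> x) * \<sigma> b x) + l2norm \<Gamma> (\<lambda>x. \<eta> x * (\<sigma> b x - \<sigma>' (q b) (q x)))"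
    by (rule l2norm_triangle[OF fin1 fin2])
  also have "l2norm \<Gamma> (\<lambda>x. (\<eta> (mul (ginv b) x) - \<eta> x) * \<sigma> b x) = l2norm \<Gamma> (\<lambda>x. \<eta> (mul (ginv b) x) - \<eta> x)"
    unfolding l2norm_eq_supp_sum using assms(1) by (simp add: norm_mult cong: supp_sum_cong)
  finally show ?thesis .
qed

lemma l2norm_transfer_error:
  assumes b: "b \<in> \<Gamma>" and \<xi>: "finite (support_on \<Gamma>' \<xi>)" and \<eta>: "finite (support_on \<Gamma> \<eta>)"
  shows "l2norm (\<Gamma>' \<times> \<Gamma>) (transfer_error \<eta> \<xi> h b) = l2norm \<Gamma>' \<xi> * (cmod (h b) * l2norm \<Gamma> (transfer_defect \<eta> b))"
    and "finite (support_on (\<Gamma>' \<times> \<Gamma>) (transfer_error \<eta> \<xi> h b))"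
proof -
  have "finite (support_on \<Gamma> (\<lambda>x. \<eta> (mul (ginv b) x)))"
    using b by (intro G.finite_support_on_translate \<eta>) simp
  then have fin: "finite (support_on \<Gamma> (\<lambda>x. h b * transfer_defect \<eta> b x))"
    by (rule finite_subset[rotated, OF finite_UnI[OF _ \<eta>]]) (auto simp: support_on_def transfer_defect_def)
  have w: "cmod (transfer_error \<eta> \<xi> h b (\<gamma>, x))
      = cmod (\<xi> (mul' (ginv' (q b)) (mul' \<gamma> (q x)))) * cmod (h b * transfer_defect \<eta> b x)"
    if "\<gamma> \<in> \<Gamma>'" "x \<in> \<Gamma>" for \<gamma> x
    using that b by (simp add: transfer_error_def norm_mult)
  show "l2norm (\<Gamma>' \<times> \<Gamma>) (transfer_error \<eta> \<xi> h b) = l2norm \<Gamma>' \<xi> * (cmod (h b) * l2norm \<Gamma> (transfer_defect \<eta> b))"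
    using l2norm_product_translate[OF \<xi> fin K.inverse_closed[OF q_closed[OF b]] w]
    by (simp add: l2norm_mult_left)
  show "finite (support_on (\<Gamma>' \<times> \<Gamma>) (transfer_error \<eta> \<xi> h b))"
    by (rule finite_support_product_translate[OF \<xi> fin K.inverse_closed[OF q_closed[OF b]] w])
qed

lemma cstar_norm_quotient_le:
  assumes B: "finite B" "B \<subseteq> \<Gamma>" "inj_on q B"
    and h: "\<And>x. x \<in> \<Gamma> \<Longrightarrow> x \<notin> B \<Longrightarrow> h x = 0"
    and F: "\<And>b. b \<in> B \<Longrightarrow> F (q b) = h b" "\<And>\<psi>. \<psi> \<in> \<Gamma>' \<Longrightarrow> \<psi> \<notin> q ` B \<Longrightarrow> F \<psi> = 0"
    and \<eta>: "finite (support_on \<Gamma> \<eta>)" "l2norm \<Gamma> \<eta> = 1"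
  shows "K.tnorm F \<le> G.tnorm h + (\<Sum>b\<in>B. cmod (h b) * l2norm \<Gamma> (transfer_defect \<eta> b))"
    (is "_ \<le> ?C")
proof (rule K.cstar_norm_least)
  fix \<xi> assume \<xi>: "finite (support_on \<Gamma>' \<xi>)" "l2norm \<Gamma>' \<xi> \<le> 1"
  let ?P = "\<lambda>(\<gamma>, x). G.conv h (\<lambda>y. transfer \<eta> \<xi> (\<gamma>, y)) x"
  let ?E = "\<lambda>p. \<Sum>b\<in>B. transfer_error \<eta> \<xi> h b p"
  have fin_h: "finite (support_on \<Gamma> h)"
    by (rule finite_subset[OF _ B(1)]) (use h in \<open>auto simp: support_on_def\<close>)
  have fin_F: "finite (support_on \<Gamma>' F)"
    by (rule finite_subset[OF _ finite_imageI[OF B(1), of q]]) (use F in \<open>auto simp: support_on_def\<close>)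
  have "l2norm \<Gamma>' (K.conv F \<xi>) = l2norm (\<Gamma>' \<times> \<Gamma>) (transfer \<eta> (K.conv F \<xi>))"
    using l2norm_transfer(1)[OF K.finite_support_tw_conv[OF fin_F \<xi>(1)] \<eta>(1)] \<eta>(2) by simp
  also have "\<dots> = l2norm (\<Gamma>' \<times> \<Gamma>) (\<lambda>p. ?P p - ?E p)"
    by (rule l2norm_cong) (auto simp: transfer_tw_conv[where h=h and F=F, OF B h F])
  also have "\<dots> \<le> l2norm (\<Gamma>' \<times> \<Gamma>) ?P + l2norm (\<Gamma>' \<times> \<Gamma>) ?E"
  proof (rule l2norm_diff_le)
    show "finite (support_on (\<Gamma>' \<times> \<Gamma>) ?P)"
      by (rule G.finite_support_fiberwise_tw_conv[OF fin_h l2norm_transfer(2)[OF \<xi>(1) \<eta>(1)]])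
    show "finite (support_on (\<Gamma>' \<times> \<Gamma>) ?E)"
      by (rule finite_support_on_sum[OF B(1)]) (use l2norm_transfer_error(2)[OF _ \<xi>(1) \<eta>(1)] B(2) in blast)
  qed
  also have "\<dots> \<le> G.tnorm h * l2norm \<Gamma>' \<xi>
      + (\<Sum>b\<in>B. l2norm \<Gamma>' \<xi> * (cmod (h b) * l2norm \<Gamma> (transfer_defect \<eta> b)))"
  proof (rule add_mono)
    show "l2norm (\<Gamma>' \<times> \<Gamma>) ?P \<le> G.tnorm h * l2norm \<Gamma>' \<xi>"
      using G.l2norm_fiberwise_tw_conv_le[OF fin_h l2norm_transfer(2)[OF \<xi>(1) \<eta>(1)]]
        l2norm_transfer(1)[OF \<xi>(1) \<eta>(1)] \<eta>(2) by simp
    show "l2norm (\<Gamma>' \<times> \<Gamma>) ?E \<le> (\<Sum>b\<in>B. l2norm \<Gamma>' \<xi> * (cmod (h b) * l2norm \<Gamma> (transfer_defect \<eta> b)))"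
      using l2norm_sum_le[OF B(1), of "\<Gamma>' \<times> \<Gamma>" "transfer_error \<eta> \<xi> h"]
        l2norm_transfer_error[OF _ \<xi>(1) \<eta>(1)] B(2) by (simp add: subset_iff)
  qed
  also have "\<dots> = ?C * l2norm \<Gamma>' \<xi>"
    by (simp add: algebra_simps sum_distrib_left)
  also have "\<dots> \<le> ?C"
    using \<xi>(2) G.cstar_norm_nonneg[OF fin_h]
    by (intro mult_left_le add_nonneg_nonneg sum_nonneg mult_nonneg_nonneg l2norm_nonneg) auto
  finally show "l2norm \<Gamma>' (K.conv F \<xi>) \<le> ?C" .
qed

definition pushforward :: "('c \<Rightarrow> complex) \<Rightarrow> 'd \<Rightarrow> complex" where
  "pushforward \<xi> \<psi> = (\<Sum>s\<in>{s \<in> support_on \<Gamma> \<xi>. q s = \<psi>}. \<xi> s)"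

lemma pushforward_apply:
  assumes "inj_on q S" "support_on \<Gamma> \<xi> \<subseteq> S" "S \<subseteq> \<Gamma>" "y \<in> S"
  shows "pushforward \<xi> (q y) = \<xi> y"
proof (cases "y \<in> support_on \<Gamma> \<xi>")
  case True
  then have "{s \<in> support_on \<Gamma> \<xi>. q s = q y} = {y}"
    using assms by (auto simp: inj_on_def)
  then show ?thesis by (simp add: pushforward_def)
next
  case False
  then have "{s \<in> support_on \<Gamma> \<xi>. q s = q y} = {}"
    using assms by (auto simp: inj_on_def)
  moreover have "\<xi> y = 0"
    using False assms(3,4) by (auto simp: support_on_def)
  ultimately show ?thesis by (simp only: pushforward_def sum.empty)
qed

lemma support_pushforward: "support_on \<Gamma>' (pushforward \<xi>) \<subseteq> q ` support_on \<Gamma> \<xi>"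
proof
  fix \<psi> assume "\<psi> \<in> support_on \<Gamma>' (pushforward \<xi>)"
  then have "(\<Sum>s\<in>{s \<in> support_on \<Gamma> \<xi>. q s = \<psi>}. \<xi> s) \<noteq> 0"
    by (simp add: support_on_def pushforward_def)
  then have "{s \<in> support_on \<Gamma> \<xi>. q s = \<psi>} \<noteq> {}"
    by (metis sum.empty)
  then show "\<psi> \<in> q ` support_on \<Gamma> \<xi>" by blast
qed

lemma l2norm_pushforward:
  assumes "finite (support_on \<Gamma> \<xi>)" "inj_on q (support_on \<Gamma> \<xi>)"
  shows "l2norm \<Gamma>' (pushforward \<xi>) = l2norm \<Gamma> \<xi>"
proof -
  have "l2norm \<Gamma>' (pushforward \<xi>) = L2_set (\<lambda>\<psi>. cmod (pushforward \<xi> \<psi>)) (q ` support_on \<Gamma> \<xi>)"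
    by (rule l2norm_eq_L2_set) (use assms support_pushforward in \<open>auto simp: support_on_def\<close>)
  also have "\<dots> = L2_set (\<lambda>s. cmod (pushforward \<xi> (q s))) (support_on \<Gamma> \<xi>)"
    using assms(2) by (simp add: L2_set_def sum.reindex)
  also have "\<dots> = L2_set (\<lambda>s. cmod (\<xi> s)) (support_on \<Gamma> \<xi>)"
    by (intro L2_set_cong refl) (subst pushforward_apply[OF assms(2)], auto simp: support_on_def)
  also have "\<dots> = l2norm \<Gamma> \<xi>"
    by (rule l2norm_eq_L2_set[symmetric]) (use assms in \<open>auto simp: support_on_def\<close>)
  finally show ?thesis .
qed

lemma tw_conv_pushforward:
  assumes B: "finite B" "B \<subseteq> \<Gamma>" and t: "t \<in> \<Gamma>"
    and h: "\<And>x. x \<in> \<Gamma> \<Longrightarrow> x \<notin> B \<Longrightarrow> h x = 0"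
    and F: "\<And>b. b \<in> B \<Longrightarrow> F (q b) = h b" "\<And>\<psi>. \<psi> \<in> \<Gamma>' \<Longrightarrow> \<psi> \<notin> q ` B \<Longrightarrow> F \<psi> = 0"
    and inj: "inj_on q (B \<union> support_on \<Gamma> \<xi> \<union> (\<lambda>b. mul (ginv b) t) ` B)"
  shows "K.conv F (pushforward \<xi>) (q t) = (\<Sum>b\<in>B. h b * \<xi> (mul (ginv b) t) * \<sigma>' (q b) (q (mul (ginv b) t)))"
proof -
  have "K.conv F (pushforward \<xi>) (q t) = (\<Sum>\<psi>\<in>q ` B. F \<psi> * pushforward \<xi> (mul' (ginv' \<psi>) (q t))
      * \<sigma>' \<psi> (mul' (ginv' \<psi>) (q t)))"
    by (rule K.tw_conv_eq_sum) (use B F in auto)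
  also have "\<dots> = (\<Sum>b\<in>B. h b * pushforward \<xi> (q (mul (ginv b) t)) * \<sigma>' (q b) (q (mul (ginv b) t)))"
    using inj B t by (simp add: sum.reindex inj_on_Un F q_left_quotient subset_iff)
  also have "\<dots> = (\<Sum>b\<in>B. h b * \<xi> (mul (ginv b) t) * \<sigma>' (q b) (q (mul (ginv b) t)))"
    using B t by (intro sum.cong refl, subst pushforward_apply[OF inj]) (auto simp: support_on_def)
  finally show ?thesis .
qed

lemma cstar_norm_quotient_ge:
  assumes B: "finite B" "B \<subseteq> \<Gamma>"
    and h: "\<And>x. x \<in> \<Gamma> \<Longrightarrow> x \<notin> B \<Longrightarrow> h x = 0"
    and F: "\<And>b. b \<in> B \<Longrightarrow> F (q b) = h b" "\<And>\<psi>. \<psi> \<in> \<Gamma>' \<Longrightarrow> \<psi> \<notin> q ` B \<Longrightarrow> F \<psi> = 0"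
    and \<xi>: "finite (support_on \<Gamma> \<xi>)" "l2norm \<Gamma> \<xi> \<le> 1"
    and T: "finite T" "T \<subseteq> \<Gamma>"
    and inj: "inj_on q (B \<union> T \<union> support_on \<Gamma> \<xi> \<union> (\<lambda>(b, t). mul (ginv b) t) ` (B \<times> T))"
  shows "L2_set (\<lambda>t. cmod (\<Sum>b\<in>B. h b * \<xi> (mul (ginv b) t) * \<sigma>' (q b) (q (mul (ginv b) t)))) T
           \<le> K.tnorm F"
proof -
  have fin_F: "finite (support_on \<Gamma>' F)"
    by (rule finite_subset[OF _ finite_imageI[OF B(1), of q]]) (use F in \<open>auto simp: support_on_def\<close>)
  have fin_push: "finite (support_on \<Gamma>' (pushforward \<xi>))"
    using finite_subset[OF support_pushforward finite_imageI[OF \<xi>(1)]] .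
  have "L2_set (\<lambda>t. cmod (\<Sum>b\<in>B. h b * \<xi> (mul (ginv b) t) * \<sigma>' (q b) (q (mul (ginv b) t)))) T
      = L2_set (\<lambda>t. cmod (K.conv F (pushforward \<xi>) (q t))) T"
  proof (intro L2_set_cong refl)
    fix t assume "t \<in> T"
    have "inj_on q (B \<union> support_on \<Gamma> \<xi> \<union> (\<lambda>b. mul (ginv b) t) ` B)"
      by (rule inj_on_subset[OF inj]) (use \<open>t \<in> T\<close> in auto)
    then show "cmod (\<Sum>b\<in>B. h b * \<xi> (mul (ginv b) t) * \<sigma>' (q b) (q (mul (ginv b) t)))
        = cmod (K.conv F (pushforward \<xi>) (q t))"
      using \<open>t \<in> T\<close> T by (simp add: tw_conv_pushforward[where h=h and F=F, OF B _ h F] subset_iff)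
  qed
  also have "\<dots> = L2_set (\<lambda>\<psi>. cmod (K.conv F (pushforward \<xi>) \<psi>)) (q ` T)"
  proof -
    have "inj_on q T" by (rule inj_on_subset[OF inj]) auto
    then show ?thesis by (simp add: L2_set_def sum.reindex)
  qed
  also have "\<dots> \<le> l2norm \<Gamma>' (K.conv F (pushforward \<xi>))"
    by (rule L2_set_le_l2norm[OF K.finite_support_tw_conv[OF fin_F fin_push]]) (use T in auto)
  also have "\<dots> \<le> K.tnorm F"
  proof (rule K.cstar_norm_upper[OF fin_F fin_push])
    have "inj_on q (support_on \<Gamma> \<xi>)" by (rule inj_on_subset[OF inj]) auto
    then show "l2norm \<Gamma>' (pushforward \<xi>) \<le> 1"
      using \<xi> by (simp add: l2norm_pushforward)
  qed
  finally show ?thesis .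
qed

end

section \<open>Characters, restriction to subgroups and the map \<open>\<theta>\<close>\<close>

lemma character_norm: "\<gamma> \<in> characters \<Longrightarrow> cmod (\<gamma> x) = 1"
  by (simp add: characters_def)

lemma character_add: "\<gamma> \<in> characters \<Longrightarrow> \<gamma> (x + y) = \<gamma> x * \<gamma> y"
  by (simp add: characters_def)

lemma character_cnj_mult: "\<gamma> \<in> characters \<Longrightarrow> cnj (\<gamma> x) * \<gamma> x = 1"
  using complex_norm_square[of "\<gamma> x"] character_norm[of \<gamma> x] by (simp add: mult.commute)

lemma mult_characters: "a \<in> characters \<Longrightarrow> b \<in> characters \<Longrightarrow> (\<lambda>x. a x * b x) \<in> characters"
  unfolding characters_def by (auto intro!: continuous_on_mult simp: norm_mult)

lemma cnj_character: "a \<in> characters \<Longrightarrow> (\<lambda>x. cnj (a x)) \<in> characters"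
  unfolding characters_def by (auto intro!: continuous_on_cnj)

lemma dual_sub_UNIV: "dual_sub UNIV = characters"
  by (simp add: dual_sub_def q_def restrict_UNIV)

lemma q_in_dual_sub: "a \<in> characters \<Longrightarrow> q H a \<in> dual_sub H"
  unfolding dual_sub_def by blast

lemma dmul_q: "dmul H (q H a) (q H b) = q H (\<lambda>x. a x * b x)"
  by (rule ext) (simp add: dmul_def q_def)

lemma dinv_q: "dinv H (q H a) = q H (\<lambda>x. cnj (a x))"
  by (rule ext) (simp add: dinv_def q_def)

lemma ab_group_on_dual_sub: "ab_group_on (dual_sub H) (dmul H) (dinv H) (q H (\<lambda>x. 1))"
proof
  fix x y z assume "x \<in> dual_sub H" "y \<in> dual_sub H" "z \<in> dual_sub H"
  then obtain a b c where abc: "a \<in> characters" "b \<in> characters" "c \<in> characters"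
    and xyz: "x = q H a" "y = q H b" "z = q H c"
    unfolding dual_sub_def by blast
  show "dmul H x y \<in> dual_sub H" "dinv H x \<in> dual_sub H"
    using abc by (simp_all add: xyz dmul_q dinv_q q_in_dual_sub mult_characters cnj_character)
  show "dmul H (dmul H x y) z = dmul H x (dmul H y z)"
    by (simp add: xyz dmul_q mult.assoc)
  show "dmul H x y = dmul H y x"
    by (simp add: xyz dmul_q mult.commute)
  show "dmul H (q H (\<lambda>x. 1)) x = x"
    by (simp add: xyz dmul_q)
  show "dmul H (dinv H x) x = q H (\<lambda>x. 1)"
    using abc by (simp add: xyz dmul_q dinv_q character_cnj_mult)
qed (simp add: characters_def q_in_dual_sub)

lemma twisted_quotient_restriction:
  assumes "skew_bichar (dual_sub UNIV) (dmul UNIV) \<sigma>" "skew_bichar (dual_sub H) (dmul H) \<sigma>'"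
  shows "twisted_quotient (dual_sub UNIV) (dmul UNIV) (dinv UNIV) (q UNIV (\<lambda>x. 1)) \<sigma>
           (dual_sub H) (dmul H) (dinv H) (q H (\<lambda>x. 1)) \<sigma>' (q H)"
proof (intro twisted_quotient.intro twisted_ab_group.intro twisted_ab_group_axioms.intro
    twisted_quotient_axioms.intro ab_group_on_dual_sub assms)
  show "q H x \<in> dual_sub H" if "x \<in> dual_sub UNIV" for x
    using that by (simp add: dual_sub_UNIV q_in_dual_sub)
  show "q H (dmul UNIV x y) = dmul H (q H x) (q H y)" for x y
    by (rule ext) (simp add: dmul_def q_def)
qed

lemma theta_eq_fiber_sum:
  assumes "\<psi> \<in> dual_sub H"
  shows "theta H f \<psi> = (\<Sum>\<gamma>\<in>{\<gamma> \<in> characters. q H \<gamma> = \<psi> \<and> f \<gamma> \<noteq> 0}. f \<gamma>)"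
proof -
  define h where "h = (SOME h. h \<in> characters \<and> q H h = \<psi>)"
  have "\<exists>h. h \<in> characters \<and> q H h = \<psi>"
    using assms by (auto simp: dual_sub_def)
  then have h: "h \<in> characters" "q H h = \<psi>"
    unfolding h_def by (metis (mono_tags, lifting) someI_ex)+
  have h_on_H: "h x = \<gamma> x" if "q H \<gamma> = \<psi>" "x \<in> H" for \<gamma> x
    using that h(2) unfolding q_def by (metis restrict_apply')
  have "bij_betw (\<lambda>j x. h x * j x) {j \<in> annihilator H. f (\<lambda>x. h x * j x) \<noteq> 0}
      {\<gamma> \<in> characters. q H \<gamma> = \<psi> \<and> f \<gamma> \<noteq> 0}"
  proof (rule bij_betw_byWitness[where f'="\<lambda>\<gamma> x. cnj (h x) * \<gamma> x"])
    show "\<forall>j\<in>{j \<in> annihilator H. f (\<lambda>x. h x * j x) \<noteq> 0}. (\<lambda>x. cnj (h x) * (h x * j x)) = j"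
      using character_cnj_mult[OF h(1)] by (simp add: mult.assoc[symmetric])
    show "\<forall>\<gamma>\<in>{\<gamma> \<in> characters. q H \<gamma> = \<psi> \<and> f \<gamma> \<noteq> 0}. (\<lambda>x. h x * (cnj (h x) * \<gamma> x)) = \<gamma>"
      using character_cnj_mult[OF h(1)] by (simp add: mult.assoc[symmetric] mult.commute[of "h _"])
    show "(\<lambda>j x. h x * j x) ` {j \<in> annihilator H. f (\<lambda>x. h x * j x) \<noteq> 0}
        \<subseteq> {\<gamma> \<in> characters. q H \<gamma> = \<psi> \<and> f \<gamma> \<noteq> 0}"
      using h by (auto simp: annihilator_def q_def mult_characters restrict_def)
    show "(\<lambda>\<gamma> x. cnj (h x) * \<gamma> x) ` {\<gamma> \<in> characters. q H \<gamma> = \<psi> \<and> f \<gamma> \<noteq> 0}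
        \<subseteq> {j \<in> annihilator H. f (\<lambda>x. h x * j x) \<noteq> 0}"
    proof (rule image_subsetI)
      fix \<gamma> assume "\<gamma> \<in> {\<gamma> \<in> characters. q H \<gamma> = \<psi> \<and> f \<gamma> \<noteq> 0}"
      then have \<gamma>: "\<gamma> \<in> characters" "q H \<gamma> = \<psi>" "f \<gamma> \<noteq> 0" by auto
      have "(\<lambda>x. cnj (h x) * \<gamma> x) \<in> characters"
        by (intro mult_characters cnj_character h(1) \<gamma>(1))
      moreover have "cnj (h x) * \<gamma> x = 1" if "x \<in> H" for x
        using h_on_H[OF \<gamma>(2) that] character_cnj_mult[OF \<gamma>(1)] by simp
      moreover have "(\<lambda>x. h x * (cnj (h x) * \<gamma> x)) = \<gamma>"
        using character_cnj_mult[OF h(1)] by (simp add: mult.assoc[symmetric] mult.commute[of "h _"])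
      ultimately show "(\<lambda>x. cnj (h x) * \<gamma> x) \<in> {j \<in> annihilator H. f (\<lambda>x. h x * j x) \<noteq> 0}"
        using \<gamma>(3) by (simp add: annihilator_def)
    qed
  qed
  then have "(\<Sum>j\<in>{j \<in> annihilator H. f (\<lambda>x. h x * j x) \<noteq> 0}. f (\<lambda>x. h x * j x))
      = (\<Sum>\<gamma>\<in>{\<gamma> \<in> characters. q H \<gamma> = \<psi> \<and> f \<gamma> \<noteq> 0}. f \<gamma>)"
    by (rule sum.reindex_bij_betw)
  then show ?thesis
    by (simp add: theta_def h_def Let_def)
qed

lemma theta_q:
  assumes "B \<subseteq> characters" "inj_on (q H) B" "\<And>\<gamma>. f \<gamma> \<noteq> 0 \<Longrightarrow> \<gamma> \<in> B" "b \<in> B"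
  shows "theta H f (q H b) = f b"
proof -
  have "{\<gamma> \<in> characters. q H \<gamma> = q H b \<and> f \<gamma> \<noteq> 0} = (if f b = 0 then {} else {b})"
    using assms by (auto simp: inj_on_def)
  then show ?thesis
    using assms by (simp add: theta_eq_fiber_sum q_in_dual_sub subset_iff)
qed

lemma theta_outside_image:
  assumes "\<psi> \<in> dual_sub H" "\<psi> \<notin> q H ` B" "\<And>\<gamma>. f \<gamma> \<noteq> 0 \<Longrightarrow> \<gamma> \<in> B"
  shows "theta H f \<psi> = 0"
proof -
  have "{\<gamma> \<in> characters. q H \<gamma> = \<psi> \<and> f \<gamma> \<noteq> 0} = {}"
    using assms by blast
  then show ?thesis
    using assms(1) by (simp add: theta_eq_fiber_sum)
qed

section \<open>Subgroups converging to \<open>G\<close>\<close>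

lemma character_tendsto:
  fixes \<gamma> :: "'a::{group_add, t2_space} \<Rightarrow> complex"
  assumes "\<gamma> \<in> characters" "a \<longlonglongrightarrow> g"
  shows "(\<lambda>n. \<gamma> (a n)) \<longlonglongrightarrow> \<gamma> g"
proof -
  have "isCont \<gamma> g"
    using assms(1) by (simp add: characters_def continuous_on_eq_continuous_at)
  then show ?thesis using assms(2) by (rule isCont_tendsto_compose)
qed

locale subgroup_approximation =
  fixes l :: "'g::{topological_ab_group_add, t2_space} \<Rightarrow> real" and H :: "nat \<Rightarrow> 'g set"
  assumes compact_UNIV: "compact (UNIV :: 'g set)"
    and length: "length_fun l" and continuous_length: "continuous_on UNIV l"
    and subgroups: "\<And>n. is_subgroup (H n)"
    and hausdorff_convergence: "(\<lambda>n. hausdorff_dist (\<lambda>g g'. l (- g + g')) (H n) UNIV) \<longlonglongrightarrow> 0"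
begin

abbreviation hdist :: "nat \<Rightarrow> ereal" where
  "hdist n \<equiv> hausdorff_dist (\<lambda>g g'. l (- g + g')) (H n) UNIV"

lemma length_nonneg: "l g \<ge> 0"
  using length by (simp add: length_fun_def)

lemma length_eq_0_iff: "l g = 0 \<longleftrightarrow> g = 0"
  using length by (simp add: length_fun_def)

lemma length_pos: "g \<noteq> 0 \<Longrightarrow> l g > 0"
  using length_nonneg[of g] length_eq_0_iff[of g] by linarith

lemma length_tendsto: "a \<longlonglongrightarrow> g \<Longrightarrow> (\<lambda>n. l (a n)) \<longlonglongrightarrow> l g"
  using continuous_length by (simp add: continuous_on_eq_continuous_at isCont_tendsto_compose)

text \<open>By compactness, \<open>l\<close> is bounded below by a positive constant outside every neighbourhood of \<open>0\<close>.\<close>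

lemma tendsto_zero_if_length_tendsto_zero:
  assumes "(\<lambda>n. l (x n)) \<longlonglongrightarrow> 0"
  shows "x \<longlonglongrightarrow> 0"
proof (rule topological_tendstoI)
  fix S :: "'g set" assume S: "open S" "0 \<in> S"
  show "\<forall>\<^sub>F n in sequentially. x n \<in> S"
  proof (cases "- S = {}")
    case True
    then have "S = UNIV" by auto
    then show ?thesis by simp
  next
    case False
    have "compact (- S)"
      using compact_Int_closed[OF compact_UNIV, of "- S"] S(1) by auto
    moreover have "continuous_on (- S) l"
      using continuous_length continuous_on_subset by blast
    ultimately obtain m where m: "m \<in> - S" "\<forall>y\<in>- S. l m \<le> l y"
      using continuous_attains_inf[OF _ False] by blast
    have "l m > 0"
      using m(1) S(2) length_pos[of m] by force
    with assms have "\<forall>\<^sub>F n in sequentially. l (x n) < l m"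
      by (rule order_tendstoD(2))
    then show ?thesis
      by eventually_elim (use m(2) in force)
  qed
qed

lemma hausdorff_dist_ge_INF: "(INF a\<in>H n. ereal (l (- a + g))) \<le> hdist n"
proof -
  have "(INF a\<in>H n. ereal (l (- a + g))) \<le> (SUP b\<in>UNIV. INF a\<in>H n. ereal (l (- a + b)))"
    by (rule SUP_upper2[of g]) auto
  then show ?thesis
    unfolding hausdorff_dist_def by (rule order_trans) simp
qed

lemma hausdorff_dist_nonneg: "hdist n \<ge> 0"
proof -
  have "0 \<le> (INF a\<in>H n. ereal (l (- a + 0)))"
    by (rule INF_greatest) (simp add: length_nonneg)
  then show ?thesis
    using hausdorff_dist_ge_INF[where n=n and g=0] by (rule order_trans)
qed

lemma exists_close_element:
  "\<exists>a\<in>H n. hdist n \<noteq> \<infinity> \<longrightarrow> ereal (l (- a + g)) < hdist n + ereal (1 / Suc n)"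
proof (cases "hdist n = \<infinity>")
  case True
  then show ?thesis using subgroups[of n] by (auto simp: is_subgroup_def)
next
  case False
  then obtain r where r: "hdist n = ereal r"
    using hausdorff_dist_nonneg[of n] by (cases "hdist n") auto
  have "hdist n < ereal (r + 1 / Suc n)"
    using r by simp
  then have "(INF a\<in>H n. ereal (l (- a + g))) < ereal (r + 1 / Suc n)"
    by (rule order_le_less_trans[OF hausdorff_dist_ge_INF])
  then obtain a where "a \<in> H n" "ereal (l (- a + g)) < ereal (r + 1 / Suc n)"
    by (auto simp: INF_less_iff)
  then show ?thesis using r by auto
qed

lemma approximating_sequence: "\<exists>a. (\<forall>n. a n \<in> H n) \<and> a \<longlonglongrightarrow> g"
proof -
  have "\<forall>n. \<exists>a. a \<in> H n \<and> (hdist n \<noteq> \<infinity> \<longrightarrow> ereal (l (- a + g)) < hdist n + ereal (1 / Suc n))"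
    using exists_close_element by blast
  then obtain a where a: "\<And>n. a n \<in> H n"
    "\<And>n. hdist n \<noteq> \<infinity> \<Longrightarrow> ereal (l (- a n + g)) < hdist n + ereal (1 / Suc n)"
    by (auto dest!: choice)
  have "(\<lambda>n. l (- a n + g)) \<longlonglongrightarrow> 0"
  proof (rule order_tendstoI)
    fix y :: real assume "y < 0"
    then have "y < l (- a n + g)" for n
      using length_nonneg[of "- a n + g"] by linarith
    then show "\<forall>\<^sub>F n in sequentially. y < l (- a n + g)"
      by simp
  next
    fix \<epsilon> :: real assume "0 < \<epsilon>"
    then have "ereal 0 < ereal (\<epsilon> / 2)" by simp
    with hausdorff_convergence have "\<forall>\<^sub>F n in sequentially. hdist n < ereal (\<epsilon> / 2)"
      by (simp add: order_tendstoD(2) zero_ereal_def)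
    moreover have "(\<lambda>n. 1 / real (Suc n)) \<longlonglongrightarrow> 0"
      using LIMSEQ_inverse_real_of_nat by (simp add: inverse_eq_divide)
    then have "\<forall>\<^sub>F n in sequentially. 1 / real (Suc n) < \<epsilon> / 2"
      by (rule order_tendstoD(2)) (use \<open>0 < \<epsilon>\<close> in simp)
    ultimately show "\<forall>\<^sub>F n in sequentially. l (- a n + g) < \<epsilon>"
    proof eventually_elim
      case (elim n)
      then obtain r where "hdist n = ereal r" "r < \<epsilon> / 2"
        using hausdorff_dist_nonneg[of n] by (cases "hdist n") auto
      then show ?case using a(2)[of n] elim by simp
    qed
  qed
  then have "(\<lambda>n. g - (- a n + g)) \<longlonglongrightarrow> g - 0"
    by (intro tendsto_diff tendsto_const tendsto_zero_if_length_tendsto_zero)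
  moreover have "(\<lambda>n. g - (- a n + g)) = a"
    by (rule ext) (simp add: algebra_simps)
  ultimately have "a \<longlonglongrightarrow> g" by simp
  with a(1) show ?thesis by blast
qed

lemma eventually_q_neq:
  assumes "x \<in> characters" "y \<in> characters" "x \<noteq> y"
  shows "\<forall>\<^sub>F n in sequentially. q (H n) x \<noteq> q (H n) y"
proof -
  obtain g where g: "x g \<noteq> y g"
    using assms(3) by (meson ext)
  obtain a where a: "\<And>n. a n \<in> H n" "a \<longlonglongrightarrow> g"
    using approximating_sequence by blast
  have "(\<lambda>n. x (a n) - y (a n)) \<longlonglongrightarrow> x g - y g"
    by (rule tendsto_diff[OF character_tendsto[OF assms(1) a(2)] character_tendsto[OF assms(2) a(2)]])
  then have "\<forall>\<^sub>F n in sequentially. x (a n) - y (a n) \<noteq> 0"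
    by (rule tendsto_imp_eventually_ne) (use g in simp)
  then show ?thesis
  proof eventually_elim
    case (elim n)
    show ?case
    proof
      assume "q (H n) x = q (H n) y"
      then have "x (a n) = y (a n)"
        using a(1)[of n] unfolding q_def by (metis restrict_apply')
      then show False using elim by simp
    qed
  qed
qed

lemma eventually_inj_on_q:
  assumes "finite K" "K \<subseteq> characters"
  shows "\<forall>\<^sub>F n in sequentially. inj_on (q (H n)) K"
proof -
  have "\<forall>\<^sub>F n in sequentially. \<forall>p\<in>K \<times> K. fst p \<noteq> snd p \<longrightarrow> q (H n) (fst p) \<noteq> q (H n) (snd p)"
  proof (rule eventually_ball_finite)
    show "finite (K \<times> K)" using assms(1) by simp
    show "\<forall>p\<in>K \<times> K. \<forall>\<^sub>F n in sequentially. fst p \<noteq> snd p \<longrightarrow> q (H n) (fst p) \<noteq> q (H n) (snd p)"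
    proof
      fix p assume "p \<in> K \<times> K"
      then have "fst p \<in> characters" "snd p \<in> characters" using assms(2) by auto
      then show "\<forall>\<^sub>F n in sequentially. fst p \<noteq> snd p \<longrightarrow> q (H n) (fst p) \<noteq> q (H n) (snd p)"
        by (cases "fst p = snd p") (simp_all add: eventually_q_neq)
    qed
  qed
  then show ?thesis
    by eventually_elim (auto simp: inj_on_def)
qed

end

section \<open>Convergence of the twisted norms and of the Lipschitz seminorms\<close>

definition act_diff :: "(('g \<Rightarrow> complex) \<Rightarrow> complex) \<Rightarrow> 'g \<Rightarrow> ('g \<Rightarrow> complex) \<Rightarrow> complex" where
  "act_diff a g = (\<lambda>\<gamma>. (1 - \<gamma> g) * a \<gamma>)"

lemma act_diff_eq: "(\<lambda>\<psi>. a \<psi> - dual_action g a \<psi>) = act_diff a g"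
  by (rule ext) (simp add: dual_action_def act_diff_def algebra_simps)

locale twisted_approximation = subgroup_approximation l H
  for l :: "'g::{topological_ab_group_add, t2_space} \<Rightarrow> real" and H +
  fixes \<sigma> :: "nat \<Rightarrow> ('g \<Rightarrow> complex) \<Rightarrow> ('g \<Rightarrow> complex) \<Rightarrow> complex"
    and \<sigma>_inf :: "('g \<Rightarrow> complex) \<Rightarrow> ('g \<Rightarrow> complex) \<Rightarrow> complex"
    and B :: "('g \<Rightarrow> complex) set" and N :: nat
  assumes bichar: "\<And>n. skew_bichar (dual_sub (H n)) (dmul (H n)) (\<sigma> n)"
    and bichar_inf: "skew_bichar (dual_sub UNIV) (dmul UNIV) \<sigma>_inf"
    and bichar_convergence: "\<And>\<gamma> \<psi>. \<gamma> \<in> characters \<Longrightarrow> \<psi> \<in> characters \<Longrightarrow>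
           (\<lambda>n. \<sigma> n (q (H n) \<gamma>) (q (H n) \<psi>)) \<longlonglongrightarrow> \<sigma>_inf \<gamma> \<psi>"
    and finite_B: "finite B" and B_characters: "B \<subseteq> characters"
    and inj_on_B: "\<And>n. n \<ge> N \<Longrightarrow> inj_on (q (H n)) B"
begin

lemma quotient: "twisted_quotient (dual_sub UNIV) (dmul UNIV) (dinv UNIV) (q UNIV (\<lambda>x. 1)) \<sigma>_inf
    (dual_sub (H n)) (dmul (H n)) (dinv (H n)) (q (H n) (\<lambda>x. 1)) (\<sigma> n) (q (H n))"
  by (rule twisted_quotient_restriction[OF bichar_inf bichar])

sublocale G: twisted_ab_group "dual_sub UNIV" "dmul UNIV" "dinv UNIV" "q UNIV (\<lambda>x. 1)" \<sigma>_inf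
  using quotient[of 0] by (rule twisted_quotient.axioms(1))

lemma B_dual: "B \<subseteq> dual_sub UNIV"
  using B_characters by (simp add: dual_sub_UNIV)

lemma finite_support_B:
  fixes f :: "('g \<Rightarrow> complex) \<Rightarrow> complex"
  shows "(\<And>\<gamma>. f \<gamma> \<noteq> 0 \<Longrightarrow> \<gamma> \<in> B) \<Longrightarrow> finite (support_on (dual_sub UNIV) f)"
  by (rule finite_subset[OF _ finite_B]) (auto simp: support_on_def)

lemma normH_nonneg:
  fixes f :: "('g \<Rightarrow> complex) \<Rightarrow> complex"
  shows "(\<And>\<gamma>. f \<gamma> \<noteq> 0 \<Longrightarrow> \<gamma> \<in> B) \<Longrightarrow> normH UNIV \<sigma>_inf f \<ge> 0"
  unfolding normH_def by (rule G.cstar_norm_nonneg[OF finite_support_B])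

lemma sum_norm_le_card_mult_normH:
  fixes f :: "('g \<Rightarrow> complex) \<Rightarrow> complex"
  assumes f: "\<And>\<gamma>. f \<gamma> \<noteq> 0 \<Longrightarrow> \<gamma> \<in> B"
  shows "(\<Sum>b\<in>B. cmod (f b)) \<le> real (card B) * normH UNIV \<sigma>_inf f"
proof -
  have "cmod (f b) \<le> normH UNIV \<sigma>_inf f" if "b \<in> B" for b
  proof -
    have "cmod (f b) \<le> L2_set (\<lambda>x. cmod (f x)) B"
      by (rule member_le_L2_set[OF finite_B that])
    also have "\<dots> = l2norm (dual_sub UNIV) f"
      by (rule l2norm_eq_L2_set[symmetric]) (use finite_B B_dual f in auto)
    also have "\<dots> \<le> normH UNIV \<sigma>_inf f"
      unfolding normH_def by (rule G.l2norm_le_cstar_norm[OF finite_support_B[OF f]])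
    finally show ?thesis .
  qed
  then show ?thesis
    using sum_mono[of B "\<lambda>b. cmod (f b)" "\<lambda>_. normH UNIV \<sigma>_inf f"] by simp
qed

lemma bichar_defect_tendsto_zero:
  assumes "finite (support_on (dual_sub UNIV) \<eta>)" "b \<in> characters"
  shows "(\<lambda>n. l2norm (dual_sub UNIV) (\<lambda>x. \<eta> x * (\<sigma>_inf b x - \<sigma> n (q (H n) b) (q (H n) x)))) \<longlonglongrightarrow> 0"
proof -
  let ?S = "support_on (dual_sub UNIV) \<eta>"
  have "l2norm (dual_sub UNIV) (\<lambda>x. \<eta> x * (\<sigma>_inf b x - \<sigma> n (q (H n) b) (q (H n) x)))
      = L2_set (\<lambda>x. cmod (\<eta> x * (\<sigma>_inf b x - \<sigma> n (q (H n) b) (q (H n) x)))) ?S" for n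
    by (rule l2norm_eq_L2_set) (use assms in \<open>auto simp: support_on_def\<close>)
  moreover have "(\<lambda>n. L2_set (\<lambda>x. cmod (\<eta> x * (\<sigma>_inf b x - \<sigma> n (q (H n) b) (q (H n) x)))) ?S)
      \<longlonglongrightarrow> L2_set (\<lambda>x. cmod (\<eta> x * (\<sigma>_inf b x - \<sigma>_inf b x))) ?S"
    unfolding L2_set_def
  proof (intro tendsto_real_sqrt tendsto_sum tendsto_power tendsto_norm tendsto_mult tendsto_diff tendsto_const)
    fix x assume "x \<in> ?S"
    then have "x \<in> characters" by (simp add: support_on_def dual_sub_UNIV)
    then show "(\<lambda>n. \<sigma> n (q (H n) b) (q (H n) x)) \<longlonglongrightarrow> \<sigma>_inf b x"
      by (rule bichar_convergence[OF assms(2)])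
  qed
  ultimately show ?thesis by (simp add: L2_set_def)
qed

lemma eventually_bichar_defect_lt:
  assumes "finite (support_on (dual_sub UNIV) \<eta>)" "\<epsilon> > 0"
  shows "\<forall>\<^sub>F n in sequentially. \<forall>b\<in>B.
           l2norm (dual_sub UNIV) (\<lambda>x. \<eta> x * (\<sigma>_inf b x - \<sigma> n (q (H n) b) (q (H n) x))) < \<epsilon>"
proof (rule eventually_ball_finite[OF finite_B], rule ballI)
  fix b assume "b \<in> B"
  then have "b \<in> characters" using B_characters by auto
  show "\<forall>\<^sub>F n in sequentially.
      l2norm (dual_sub UNIV) (\<lambda>x. \<eta> x * (\<sigma>_inf b x - \<sigma> n (q (H n) b) (q (H n) x))) < \<epsilon>"
    using bichar_defect_tendsto_zero[OF assms(1) \<open>b \<in> characters\<close>] assms(2)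
    by (rule order_tendstoD(2))
qed

lemma theta_on_quotient:
  fixes f :: "('g \<Rightarrow> complex) \<Rightarrow> complex"
  assumes "n \<ge> N" "\<And>\<gamma>. f \<gamma> \<noteq> 0 \<Longrightarrow> \<gamma> \<in> B"
  shows "\<And>b. b \<in> B \<Longrightarrow> theta (H n) f (q (H n) b) = f b"
    and "\<And>\<psi>. \<psi> \<in> dual_sub (H n) \<Longrightarrow> \<psi> \<notin> q (H n) ` B \<Longrightarrow> theta (H n) f \<psi> = 0"
  using theta_q[OF B_characters inj_on_B[OF assms(1)] assms(2)]
    theta_outside_image[of _ "H n" B f] assms(2) by blast+

lemma normH_theta_le_transfer:
  fixes f :: "('g \<Rightarrow> complex) \<Rightarrow> complex"
  assumes n: "n \<ge> N" and f: "\<And>\<gamma>. f \<gamma> \<noteq> 0 \<Longrightarrow> \<gamma> \<in> B"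
    and \<eta>: "finite (support_on (dual_sub UNIV) \<eta>)" "l2norm (dual_sub UNIV) \<eta> = 1"
  shows "normH (H n) (\<sigma> n) (theta (H n) f) \<le> normH UNIV \<sigma>_inf f + (\<Sum>b\<in>B. cmod (f b) *
           (l2norm (dual_sub UNIV) (\<lambda>x. \<eta> (dmul UNIV (dinv UNIV b) x) - \<eta> x)
            + l2norm (dual_sub UNIV) (\<lambda>x. \<eta> x * (\<sigma>_inf b x - \<sigma> n (q (H n) b) (q (H n) x)))))"
proof -
  interpret Q: twisted_quotient "dual_sub UNIV" "dmul UNIV" "dinv UNIV" "q UNIV (\<lambda>x. 1)" \<sigma>_inf
    "dual_sub (H n)" "dmul (H n)" "dinv (H n)" "q (H n) (\<lambda>x. 1)" "\<sigma> n" "q (H n)"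
    by (rule quotient)
  have "normH (H n) (\<sigma> n) (theta (H n) f)
      \<le> normH UNIV \<sigma>_inf f + (\<Sum>b\<in>B. cmod (f b) * l2norm (dual_sub UNIV) (Q.transfer_defect \<eta> b))"
    unfolding normH_def
    by (rule Q.cstar_norm_quotient_le[where h=f and F="theta (H n) f", OF finite_B B_dual
          inj_on_B[OF n] _ theta_on_quotient[OF n f] \<eta>]) (use f in auto)
  also have "\<dots> \<le> normH UNIV \<sigma>_inf f + (\<Sum>b\<in>B. cmod (f b) *
      (l2norm (dual_sub UNIV) (\<lambda>x. \<eta> (dmul UNIV (dinv UNIV b) x) - \<eta> x)
       + l2norm (dual_sub UNIV) (\<lambda>x. \<eta> x * (\<sigma>_inf b x - \<sigma> n (q (H n) b) (q (H n) x)))))"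
    using B_dual
    by (intro add_left_mono sum_mono mult_left_mono norm_ge_zero Q.l2norm_transfer_defect_le \<eta>(1)) auto
  finally show ?thesis .
qed

lemma eventually_normH_theta_le:
  assumes "\<epsilon> > 0"
  shows "\<forall>\<^sub>F n in sequentially. \<forall>f. (\<forall>\<gamma>. f \<gamma> \<noteq> 0 \<longrightarrow> \<gamma> \<in> B) \<longrightarrow>
           normH (H n) (\<sigma> n) (theta (H n) f) \<le> normH UNIV \<sigma>_inf f + \<epsilon> * (\<Sum>b\<in>B. cmod (f b))"
proof -
  obtain \<eta> where \<eta>: "finite (support_on (dual_sub UNIV) \<eta>)" "l2norm (dual_sub UNIV) \<eta> = 1"
    "\<forall>b\<in>dinv UNIV ` B. l2norm (dual_sub UNIV) (\<lambda>x. \<eta> (dmul UNIV b x) - \<eta> x) \<le> \<epsilon> / 2"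
  proof -
    have "dinv UNIV ` B \<subseteq> dual_sub UNIV"
      using B_dual by auto
    from G.almost_invariant_unit_vector_exists[OF finite_imageI[OF finite_B] this half_gt_zero[OF assms]]
    show ?thesis using that by blast
  qed
  have "\<forall>\<^sub>F n in sequentially. \<forall>b\<in>B.
      l2norm (dual_sub UNIV) (\<lambda>x. \<eta> x * (\<sigma>_inf b x - \<sigma> n (q (H n) b) (q (H n) x))) < \<epsilon> / 2"
    by (rule eventually_bichar_defect_lt[OF \<eta>(1) half_gt_zero[OF assms]])
  moreover have "\<forall>\<^sub>F n in sequentially. n \<ge> N"
    by (rule eventually_ge_at_top)
  ultimately show ?thesis
  proof eventually_elim
    case (elim n)
    show ?case
    proof (intro allI impI)
      fix f :: "('g \<Rightarrow> complex) \<Rightarrow> complex" assume "\<forall>\<gamma>. f \<gamma> \<noteq> 0 \<longrightarrow> \<gamma> \<in> B"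
      then have f: "\<And>\<gamma>. f \<gamma> \<noteq> 0 \<Longrightarrow> \<gamma> \<in> B" by blast
      note normH_theta_le_transfer[OF elim(2) f \<eta>(1,2)]
      also have "normH UNIV \<sigma>_inf f + (\<Sum>b\<in>B. cmod (f b) *
          (l2norm (dual_sub UNIV) (\<lambda>x. \<eta> (dmul UNIV (dinv UNIV b) x) - \<eta> x)
           + l2norm (dual_sub UNIV) (\<lambda>x. \<eta> x * (\<sigma>_inf b x - \<sigma> n (q (H n) b) (q (H n) x)))))
        \<le> normH UNIV \<sigma>_inf f + (\<Sum>b\<in>B. cmod (f b) * \<epsilon>)"
      proof (intro add_left_mono sum_mono mult_left_mono norm_ge_zero)
        fix b assume "b \<in> B"
        then have "l2norm (dual_sub UNIV) (\<lambda>x. \<eta> (dmul UNIV (dinv UNIV b) x) - \<eta> x) \<le> \<epsilon> / 2"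
          and "l2norm (dual_sub UNIV) (\<lambda>x. \<eta> x * (\<sigma>_inf b x - \<sigma> n (q (H n) b) (q (H n) x))) < \<epsilon> / 2"
          using \<eta>(3) elim(1) by blast+
        then show "l2norm (dual_sub UNIV) (\<lambda>x. \<eta> (dmul UNIV (dinv UNIV b) x) - \<eta> x)
            + l2norm (dual_sub UNIV) (\<lambda>x. \<eta> x * (\<sigma>_inf b x - \<sigma> n (q (H n) b) (q (H n) x))) \<le> \<epsilon>"
          by linarith
      qed
      finally show "normH (H n) (\<sigma> n) (theta (H n) f) \<le> normH UNIV \<sigma>_inf f + \<epsilon> * (\<Sum>b\<in>B. cmod (f b))"
        by (simp add: sum_distrib_left mult.commute)
    qed
  qed
qed

lemma eventually_normH_theta_le_mult:
  assumes "\<delta> > 0"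
  shows "\<forall>\<^sub>F n in sequentially. \<forall>f. (\<forall>\<gamma>. f \<gamma> \<noteq> 0 \<longrightarrow> \<gamma> \<in> B) \<longrightarrow>
           normH (H n) (\<sigma> n) (theta (H n) f) \<le> (1 + \<delta>) * normH UNIV \<sigma>_inf f"
proof -
  define \<epsilon> where "\<epsilon> = \<delta> / (real (card B) + 1)"
  have "\<epsilon> > 0" "\<epsilon> * real (card B) \<le> \<delta>"
    using assms by (simp_all add: \<epsilon>_def field_simps)
  show ?thesis
    using eventually_normH_theta_le[OF \<open>\<epsilon> > 0\<close>]
  proof eventually_elim
    case (elim n)
    show ?case
    proof (intro allI impI)
      fix f :: "('g \<Rightarrow> complex) \<Rightarrow> complex" assume f: "\<forall>\<gamma>. f \<gamma> \<noteq> 0 \<longrightarrow> \<gamma> \<in> B"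
      then have f': "\<And>\<gamma>. f \<gamma> \<noteq> 0 \<Longrightarrow> \<gamma> \<in> B" by blast
      have "\<epsilon> * (\<Sum>b\<in>B. cmod (f b)) \<le> \<epsilon> * (real (card B) * normH UNIV \<sigma>_inf f)"
        using sum_norm_le_card_mult_normH[OF f'] \<open>\<epsilon> > 0\<close> by simp
      also have "\<dots> \<le> \<delta> * normH UNIV \<sigma>_inf f"
        using \<open>\<epsilon> * real (card B) \<le> \<delta>\<close> normH_nonneg[OF f']
        by (simp add: mult.assoc[symmetric] mult_right_mono)
      moreover have "normH (H n) (\<sigma> n) (theta (H n) f) \<le> normH UNIV \<sigma>_inf f + \<epsilon> * (\<Sum>b\<in>B. cmod (f b))"
        using elim f by blast
      ultimately show "normH (H n) (\<sigma> n) (theta (H n) f) \<le> (1 + \<delta>) * normH UNIV \<sigma>_inf f"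
        by (simp add: distrib_right)
    qed
  qed
qed

lemma tendsto_quotient_witness:
  fixes f :: "('g \<Rightarrow> complex) \<Rightarrow> complex" and fs :: "nat \<Rightarrow> ('g \<Rightarrow> complex) \<Rightarrow> complex"
  assumes f: "\<And>\<gamma>. f \<gamma> \<noteq> 0 \<Longrightarrow> \<gamma> \<in> B" and fs: "\<And>b. b \<in> B \<Longrightarrow> (\<lambda>n. fs n b) \<longlonglongrightarrow> f b"
    and T: "finite T" "T \<subseteq> dual_sub UNIV" "support_on (dual_sub UNIV) (G.conv f \<xi>) \<subseteq> T"
  shows "(\<lambda>n. L2_set (\<lambda>t. cmod (\<Sum>b\<in>B. fs n b * \<xi> (dmul UNIV (dinv UNIV b) t)
            * \<sigma> n (q (H n) b) (q (H n) (dmul UNIV (dinv UNIV b) t)))) T)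
           \<longlonglongrightarrow> l2norm (dual_sub UNIV) (G.conv f \<xi>)"
proof -
  have "l2norm (dual_sub UNIV) (G.conv f \<xi>) = L2_set (\<lambda>t. cmod (G.conv f \<xi> t)) T"
    by (rule l2norm_eq_L2_set) (use T in \<open>auto simp: support_on_def\<close>)
  also have "\<dots> = L2_set (\<lambda>t. cmod (\<Sum>b\<in>B. f b * \<xi> (dmul UNIV (dinv UNIV b) t)
      * \<sigma>_inf b (dmul UNIV (dinv UNIV b) t))) T"
    by (intro L2_set_cong refl arg_cong[where f=cmod] G.tw_conv_eq_sum finite_B B_dual) (use f in auto)
  finally have lim: "l2norm (dual_sub UNIV) (G.conv f \<xi>) = \<dots>" .
  show ?thesis
    unfolding lim L2_set_def
  proof (intro tendsto_real_sqrt tendsto_sum tendsto_power tendsto_norm tendsto_mult tendsto_const fs)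
    fix t b assume "t \<in> T" "b \<in> B"
    then have "b \<in> dual_sub UNIV" "dmul UNIV (dinv UNIV b) t \<in> dual_sub UNIV"
      using T B_dual by (auto intro!: G.mul_closed G.inverse_closed)
    then have "b \<in> characters" "dmul UNIV (dinv UNIV b) t \<in> characters"
      by (simp_all add: dual_sub_UNIV)
    then show "(\<lambda>n. \<sigma> n (q (H n) b) (q (H n) (dmul UNIV (dinv UNIV b) t)))
        \<longlonglongrightarrow> \<sigma>_inf b (dmul UNIV (dinv UNIV b) t)"
      by (rule bichar_convergence)
  qed
qed

lemma eventually_normH_theta_gt:
  fixes f :: "('g \<Rightarrow> complex) \<Rightarrow> complex" and fs :: "nat \<Rightarrow> ('g \<Rightarrow> complex) \<Rightarrow> complex"
  assumes f: "\<And>\<gamma>. f \<gamma> \<noteq> 0 \<Longrightarrow> \<gamma> \<in> B" and fs: "\<And>n \<gamma>. fs n \<gamma> \<noteq> 0 \<Longrightarrow> \<gamma> \<in> B"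
    and lim: "\<And>b. b \<in> B \<Longrightarrow> (\<lambda>n. fs n b) \<longlonglongrightarrow> f b" and "\<epsilon> > 0"
  shows "\<forall>\<^sub>F n in sequentially. normH UNIV \<sigma>_inf f - \<epsilon> < normH (H n) (\<sigma> n) (theta (H n) (fs n))"
proof -
  obtain \<xi> where \<xi>: "finite (support_on (dual_sub UNIV) \<xi>)" "l2norm (dual_sub UNIV) \<xi> \<le> 1"
      "normH UNIV \<sigma>_inf f - \<epsilon> < l2norm (dual_sub UNIV) (G.conv f \<xi>)"
    using G.cstar_norm_approx[OF finite_support_B[OF f] \<open>\<epsilon> > 0\<close>] unfolding normH_def by blast
  define T where "T = support_on (dual_sub UNIV) (G.conv f \<xi>)"
  define K where "K = B \<union> T \<union> support_on (dual_sub UNIV) \<xi> \<union> (\<lambda>(b, t). dmul UNIV (dinv UNIV b) t) ` (B \<times> T)"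
  have T: "finite T" "T \<subseteq> dual_sub UNIV"
    unfolding T_def by (rule G.finite_support_tw_conv[OF finite_support_B[OF f] \<xi>(1)]) (auto simp: support_on_def)
  have "K \<subseteq> dual_sub UNIV"
    using T B_dual by (auto simp: K_def support_on_def intro!: G.mul_closed G.inverse_closed)
  then have "finite K" "K \<subseteq> characters"
    using T \<xi>(1) finite_B by (simp_all add: K_def dual_sub_UNIV)
  then have "\<forall>\<^sub>F n in sequentially. inj_on (q (H n)) K"
    by (rule eventually_inj_on_q)
  moreover have "\<forall>\<^sub>F n in sequentially. normH UNIV \<sigma>_inf f - \<epsilon> < L2_set (\<lambda>t. cmod (\<Sum>b\<in>B.
      fs n b * \<xi> (dmul UNIV (dinv UNIV b) t) * \<sigma> n (q (H n) b) (q (H n) (dmul UNIV (dinv UNIV b) t)))) T"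
  proof -
    have "support_on (dual_sub UNIV) (G.conv f \<xi>) \<subseteq> T" by (simp add: T_def)
    from tendsto_quotient_witness[OF f lim T this] \<xi>(3) show ?thesis
      by (rule order_tendstoD(1))
  qed
  moreover have "\<forall>\<^sub>F n in sequentially. n \<ge> N"
    by (rule eventually_ge_at_top)
  ultimately show ?thesis
  proof eventually_elim
    case (elim n)
    interpret Q: twisted_quotient "dual_sub UNIV" "dmul UNIV" "dinv UNIV" "q UNIV (\<lambda>x. 1)" \<sigma>_inf
      "dual_sub (H n)" "dmul (H n)" "dinv (H n)" "q (H n) (\<lambda>x. 1)" "\<sigma> n" "q (H n)"
      by (rule quotient)
    have "L2_set (\<lambda>t. cmod (\<Sum>b\<in>B. fs n b * \<xi> (dmul UNIV (dinv UNIV b) t)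
        * \<sigma> n (q (H n) b) (q (H n) (dmul UNIV (dinv UNIV b) t)))) T \<le> normH (H n) (\<sigma> n) (theta (H n) (fs n))"
      unfolding normH_def
      by (rule Q.cstar_norm_quotient_ge[where h="fs n" and F="theta (H n) (fs n)", OF finite_B B_dual _
            theta_on_quotient[OF elim(3) fs] \<xi>(1,2) T])
         (use elim(1) fs in \<open>auto simp: K_def\<close>)
    with elim(2) show ?case by linarith
  qed
qed

lemma act_diff_support: "(\<And>\<gamma>. a \<gamma> \<noteq> 0 \<Longrightarrow> \<gamma> \<in> B) \<Longrightarrow> act_diff a g \<gamma> \<noteq> 0 \<Longrightarrow> \<gamma> \<in> B"
  by (auto simp: act_diff_def)

lemma LipL_UNIV_eq: "LipL l UNIV \<sigma>_inf a = (SUP g\<in>UNIV - {0}. ereal (normH UNIV \<sigma>_inf (act_diff a g) / l g))"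
  by (simp add: LipL_def act_diff_eq)

lemma LipL_theta_eq:
  assumes "n \<ge> N" and a: "\<And>\<gamma>. a \<gamma> \<noteq> 0 \<Longrightarrow> \<gamma> \<in> B"
  shows "LipL l (H n) (\<sigma> n) (theta (H n) a)
           = (SUP g\<in>H n - {0}. ereal (normH (H n) (\<sigma> n) (theta (H n) (act_diff a g)) / l g))"
  unfolding LipL_def
proof (intro SUP_cong refl arg_cong[where f=ereal] arg_cong[where f="\<lambda>x. x / _"])
  fix g assume g: "g \<in> H n - {0}"
  have ad: "\<And>\<gamma>. act_diff a g \<gamma> \<noteq> 0 \<Longrightarrow> \<gamma> \<in> B"
    using a by (rule act_diff_support)
  interpret Q: twisted_quotient "dual_sub UNIV" "dmul UNIV" "dinv UNIV" "q UNIV (\<lambda>x. 1)" \<sigma>_inf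
    "dual_sub (H n)" "dmul (H n)" "dinv (H n)" "q (H n) (\<lambda>x. 1)" "\<sigma> n" "q (H n)"
    by (rule quotient)
  show "normH (H n) (\<sigma> n) (\<lambda>\<psi>. theta (H n) a \<psi> - dual_action g (theta (H n) a) \<psi>)
      = normH (H n) (\<sigma> n) (theta (H n) (act_diff a g))"
    unfolding normH_def
  proof (rule Q.K.cstar_norm_cong)
    fix \<psi> assume \<psi>: "\<psi> \<in> dual_sub (H n)"
    show "theta (H n) a \<psi> - dual_action g (theta (H n) a) \<psi> = theta (H n) (act_diff a g) \<psi>"
    proof (cases "\<psi> \<in> q (H n) ` B")
      case True
      then obtain b where b: "b \<in> B" "\<psi> = q (H n) b" by blast
      have "\<psi> g = b g" using b g by (simp add: q_def)
      moreover have "theta (H n) a \<psi> = a b"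
        using b theta_on_quotient(1)[where f=a, OF assms] by simp
      moreover have "theta (H n) (act_diff a g) \<psi> = act_diff a g b"
        using b theta_on_quotient(1)[where f="act_diff a g", OF assms(1) ad] by simp
      ultimately show ?thesis
        by (simp add: dual_action_def act_diff_def left_diff_distrib)
    next
      case False
      then show ?thesis
        using \<psi> theta_on_quotient(2)[where f=a, OF assms]
          theta_on_quotient(2)[where f="act_diff a g", OF assms(1) ad]
        by (simp add: dual_action_def)
    qed
  qed
qed

lemma eventually_normH_theta_act_diff_gt:
  assumes a: "\<And>\<gamma>. a \<gamma> \<noteq> 0 \<Longrightarrow> \<gamma> \<in> B" and "an \<longlonglongrightarrow> g" "\<epsilon> > 0"
  shows "\<forall>\<^sub>F n in sequentially. normH UNIV \<sigma>_inf (act_diff a g) - \<epsilon>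
           < normH (H n) (\<sigma> n) (theta (H n) (act_diff a (an n)))"
proof -
  have "(\<lambda>n. act_diff a (an n) b) \<longlonglongrightarrow> act_diff a g b" if "b \<in> B" for b
  proof -
    have "(\<lambda>n. b (an n)) \<longlonglongrightarrow> b g"
      using that B_characters by (intro character_tendsto[OF _ assms(2)]) auto
    then show ?thesis
      unfolding act_diff_def by (intro tendsto_mult tendsto_diff tendsto_const)
  qed
  moreover have "\<And>\<gamma>. act_diff a g \<gamma> \<noteq> 0 \<Longrightarrow> \<gamma> \<in> B" "\<And>n \<gamma>. act_diff a (an n) \<gamma> \<noteq> 0 \<Longrightarrow> \<gamma> \<in> B"
    using act_diff_support[OF a] by blast+
  ultimately show ?thesis
    using \<open>\<epsilon> > 0\<close> by (intro eventually_normH_theta_gt)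
qed

lemma LipL_theta_eventually_gt:
  assumes a: "\<And>\<gamma>. a \<gamma> \<noteq> 0 \<Longrightarrow> \<gamma> \<in> B" and y: "y < LipL l UNIV \<sigma>_inf a"
  shows "\<forall>\<^sub>F n in sequentially. y < LipL l (H n) (\<sigma> n) (theta (H n) a)"
proof -
  obtain g where g: "g \<noteq> 0" "y < ereal (normH UNIV \<sigma>_inf (act_diff a g) / l g)"
    using y by (auto simp: LipL_UNIV_eq less_SUP_iff)
  define r where "r = normH UNIV \<sigma>_inf (act_diff a g) / l g"
  obtain z where z: "y < ereal z" "z < r"
    using ereal_dense2[OF g(2)[folded r_def]] by auto
  have lg: "l g > 0" by (rule length_pos[OF g(1)])
  obtain an where an: "\<And>n. an n \<in> H n" "an \<longlonglongrightarrow> g"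
    using approximating_sequence by blast
  define \<epsilon> where "\<epsilon> = (r - z) * l g / 2"
  have "\<epsilon> > 0" using z lg by (simp add: \<epsilon>_def)
  have "\<forall>\<^sub>F n in sequentially. normH UNIV \<sigma>_inf (act_diff a g) - \<epsilon>
      < normH (H n) (\<sigma> n) (theta (H n) (act_diff a (an n)))"
    by (rule eventually_normH_theta_act_diff_gt[OF a an(2) \<open>\<epsilon> > 0\<close>])
  moreover have "(\<lambda>n. (normH UNIV \<sigma>_inf (act_diff a g) - \<epsilon>) / l (an n))
      \<longlonglongrightarrow> (normH UNIV \<sigma>_inf (act_diff a g) - \<epsilon>) / l g"
    using lg by (intro tendsto_divide tendsto_const length_tendsto[OF an(2)]) simp
  then have "\<forall>\<^sub>F n in sequentially. z < (normH UNIV \<sigma>_inf (act_diff a g) - \<epsilon>) / l (an n)"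
    by (rule order_tendstoD(1)) (use lg z(2) in \<open>simp add: r_def \<epsilon>_def field_simps\<close>)
  moreover have "\<forall>\<^sub>F n in sequentially. 0 < l (an n)"
    using length_tendsto[OF an(2)] lg by (rule order_tendstoD(1))
  moreover have "\<forall>\<^sub>F n in sequentially. n \<ge> N"
    by (rule eventually_ge_at_top)
  ultimately show ?thesis
  proof eventually_elim
    case (elim n)
    then have "an n \<in> H n - {0}"
      using an(1)[of n] length_eq_0_iff by force
    have "z < (normH UNIV \<sigma>_inf (act_diff a g) - \<epsilon>) / l (an n)"
      using elim(2) .
    also have "\<dots> < normH (H n) (\<sigma> n) (theta (H n) (act_diff a (an n))) / l (an n)"
      using elim(1,3) by (rule divide_strict_right_mono)
    finally have "y < ereal (normH (H n) (\<sigma> n) (theta (H n) (act_diff a (an n))) / l (an n))"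
      using z(1) by (metis less_ereal.simps(1) order.strict_trans)
    also have "\<dots> \<le> (SUP g\<in>H n - {0}. ereal (normH (H n) (\<sigma> n) (theta (H n) (act_diff a g)) / l g))"
      using \<open>an n \<in> H n - {0}\<close> by (rule SUP_upper)
    also have "\<dots> = LipL l (H n) (\<sigma> n) (theta (H n) a)"
      by (rule LipL_theta_eq[symmetric, OF elim(4) a])
    finally show ?case .
  qed
qed

lemma LipL_theta_eventually_le_mult:
  assumes a: "\<And>\<gamma>. a \<gamma> \<noteq> 0 \<Longrightarrow> \<gamma> \<in> B" and "\<delta> > 0" and M: "LipL l UNIV \<sigma>_inf a = ereal M"
  shows "\<forall>\<^sub>F n in sequentially. LipL l (H n) (\<sigma> n) (theta (H n) a) \<le> ereal ((1 + \<delta>) * M)"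
proof -
  have "\<forall>\<^sub>F n in sequentially. n \<ge> N" by (rule eventually_ge_at_top)
  with eventually_normH_theta_le_mult[OF \<open>\<delta> > 0\<close>] show ?thesis
  proof eventually_elim
  case (elim n)
  have "LipL l (H n) (\<sigma> n) (theta (H n) a)
      = (SUP g\<in>H n - {0}. ereal (normH (H n) (\<sigma> n) (theta (H n) (act_diff a g)) / l g))"
    by (rule LipL_theta_eq[OF elim(2) a])
  also have "\<dots> \<le> ereal ((1 + \<delta>) * M)"
  proof (rule SUP_least)
    fix g assume g: "g \<in> H n - {0}"
    have "ereal (normH UNIV \<sigma>_inf (act_diff a g) / l g) \<le> LipL l UNIV \<sigma>_inf a"
      unfolding LipL_UNIV_eq by (rule SUP_upper) (use g in simp)
    then have ratio: "normH UNIV \<sigma>_inf (act_diff a g) / l g \<le> M"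
      using M by simp
    have "normH (H n) (\<sigma> n) (theta (H n) (act_diff a g)) \<le> (1 + \<delta>) * normH UNIV \<sigma>_inf (act_diff a g)"
      using elim(1) act_diff_support[OF a] by blast
    then have "normH (H n) (\<sigma> n) (theta (H n) (act_diff a g)) / l g
        \<le> (1 + \<delta>) * (normH UNIV \<sigma>_inf (act_diff a g) / l g)"
      using length_pos[of g] g by (simp add: divide_right_mono)
    also have "\<dots> \<le> (1 + \<delta>) * M"
      using ratio \<open>\<delta> > 0\<close> by (intro mult_left_mono) auto
    finally show "ereal (normH (H n) (\<sigma> n) (theta (H n) (act_diff a g)) / l g) \<le> ereal ((1 + \<delta>) * M)"
      by simp
  qed
  finally show ?case .
  qed
qed

lemma LipL_theta_eventually_lt:
  assumes a: "\<And>\<gamma>. a \<gamma> \<noteq> 0 \<Longrightarrow> \<gamma> \<in> B" and y: "LipL l UNIV \<sigma>_inf a < y"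
  shows "\<forall>\<^sub>F n in sequentially. LipL l (H n) (\<sigma> n) (theta (H n) a) < y"
proof (cases "LipL l UNIV \<sigma>_inf a")
  case (real M)
  obtain z where z: "M < z" "ereal z < y"
    using ereal_dense2[OF y[unfolded real]] by auto
  define \<delta> where "\<delta> = (z - M) / (\<bar>M\<bar> + 1)"
  have "\<delta> > 0" using z by (simp add: \<delta>_def)
  have "\<delta> * M \<le> \<delta> * \<bar>M\<bar>" using \<open>\<delta> > 0\<close> by simp
  also have "\<dots> < \<delta> * (\<bar>M\<bar> + 1)" using \<open>\<delta> > 0\<close> by simp
  also have "\<dots> = z - M" by (simp add: \<delta>_def)
  finally have "(1 + \<delta>) * M < z" by (simp add: algebra_simps)
  then have bound: "ereal ((1 + \<delta>) * M) < y"
    using z(2) by (metis less_ereal.simps(1) order.strict_trans)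
  have "\<forall>\<^sub>F n in sequentially. LipL l (H n) (\<sigma> n) (theta (H n) a) \<le> ereal ((1 + \<delta>) * M)"
    by (rule LipL_theta_eventually_le_mult[OF a \<open>\<delta> > 0\<close> real])
  then show ?thesis
  proof eventually_elim
    case (elim n)
    then show ?case using bound by (rule order_le_less_trans)
  qed
next
  case PInf
  then show ?thesis using y by simp
next
  case MInf
  have empty: "H n - {0} = {}" for n
  proof -
    have "ereal (normH UNIV \<sigma>_inf (act_diff a g) / l g) \<le> LipL l UNIV \<sigma>_inf a" if "g \<noteq> 0" for g
      unfolding LipL_UNIV_eq by (rule SUP_upper) (use that in simp)
    then show ?thesis using MInf by auto
  qed
  have "LipL l (H n) (\<sigma> n) (theta (H n) a) = -\<infinity>" for n
    unfolding LipL_def empty by (simp add: bot_ereal_def)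
  then show ?thesis using y MInf by simp
qed

lemma LipL_theta_tendsto:
  assumes "\<And>\<gamma>. a \<gamma> \<noteq> 0 \<Longrightarrow> \<gamma> \<in> B"
  shows "(\<lambda>n. LipL l (H n) (\<sigma> n) (theta (H n) a)) \<longlonglongrightarrow> LipL l UNIV \<sigma>_inf a"
  using LipL_theta_eventually_gt[OF assms] LipL_theta_eventually_lt[OF assms] by (rule order_tendstoI)

end

theorem mainTheorem4:
  fixes l :: "'g::{topological_ab_group_add, t2_space} \<Rightarrow> real"
    and H :: "nat \<Rightarrow> 'g set"
    and lam :: "nat \<Rightarrow> 'g measure" and lam_inf :: "'g measure"
    and \<sigma> :: "nat \<Rightarrow> ('g \<Rightarrow> complex) \<Rightarrow> ('g \<Rightarrow> complex) \<Rightarrow> complex"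
    and \<sigma>_inf :: "('g \<Rightarrow> complex) \<Rightarrow> ('g \<Rightarrow> complex) \<Rightarrow> complex"
    and \<epsilon> :: real and \<phi> :: "'g \<Rightarrow> real"
    and c :: "('g \<Rightarrow> complex) \<Rightarrow> complex" and B :: "('g \<Rightarrow> complex) set"
    and N :: nat
  assumes G_compact: "compact (UNIV :: 'g set)"
    and l_len: "length_fun l" and l_cont: "continuous_on UNIV l"
    and H_sub: "\<forall>n. closed (H n) \<and> is_subgroup (H n)"
    and H_conv: "(\<lambda>n. hausdorff_dist (\<lambda>g g'. l (- g + g')) (H n) UNIV) \<longlonglongrightarrow> 0"
    and haar: "\<forall>n. haar_prob (H n) (lam n)" and haar_inf: "haar_prob UNIV lam_inf"
    and sig: "\<forall>n. skew_bichar (dual_sub (H n)) (dmul (H n)) (\<sigma> n)"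
    and sig_inf: "skew_bichar (dual_sub UNIV) (dmul UNIV) \<sigma>_inf"
    and sig_conv: "\<forall>\<gamma>\<in>characters. \<forall>\<psi>\<in>characters.
                     (\<lambda>n. \<sigma> n (q (H n) \<gamma>) (q (H n) \<psi>)) \<longlonglongrightarrow> \<sigma>_inf \<gamma> \<psi>"
    and eps: "\<epsilon> > 0"
    and B_fin: "finite B" and B_chars: "B \<subseteq> characters" and c_nz: "\<forall>\<gamma>\<in>B. c \<gamma> \<noteq> 0"
    and phi_comb: "\<forall>x. complex_of_real (\<phi> x) = (\<Sum>\<gamma>\<in>B. c \<gamma> * \<gamma> x)"
    and phi_nonneg: "\<forall>x. \<phi> x \<ge> 0"
    and phi_int: "integral\<^sup>L lam_inf \<phi> = 1"
    and phi_l: "integral\<^sup>L lam_inf (\<lambda>x. \<phi> x * l x) \<le> \<epsilon> / (3 * (1 + \<epsilon>))"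
    and N_eps: "\<forall>n\<ge>N. inj_on (q (H n)) B \<and> integral\<^sup>L (lam n) \<phi> \<ge> 1 / (1 + \<epsilon>)"
  shows "\<forall>a\<in>V_eps B \<sigma>_inf.
           (\<lambda>n. LipL l (H n) (\<sigma> n) (theta (H n) a)) \<longlonglongrightarrow> LipL l UNIV \<sigma>_inf a"
proof
  fix a assume "a \<in> V_eps B \<sigma>_inf"
  then have a: "\<And>\<gamma>. a \<gamma> \<noteq> 0 \<Longrightarrow> \<gamma> \<in> B"
    by (auto simp: V_eps_def)
  interpret twisted_approximation l H \<sigma> \<sigma>_inf B N
    using G_compact l_len l_cont H_sub H_conv sig sig_inf sig_conv B_fin B_chars N_eps
    by unfold_locales auto
  show "(\<lambda>n. LipL l (H n) (\<sigma> n) (theta (H n) a)) \<longlonglongrightarrow> LipL l UNIV \<sigma>_inf a"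
    by (rule LipL_theta_tendsto[OF a])
qed

end
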